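(* Let $H$ be a group, $K\lneq H$, $\phi\in\operatorname{Aut}(H)$, $G=\langle H,t;\ tkt^{-1}=\phi(k),\ k\in K\rangle$. The map $\overline{\chi_2}:N_H(K)\to\operatorname{Out}_H^{(V)}(G)$ sending $b$ to the outer class of $\alpha_{(\gamma_b,\,b^{-1}\phi(b))}$ is a homomorphism with kernel $JK$, where $J=Z(H)\cap\operatorname{Fix}(\phi)$.
   Context: $\gamma_b$ denotes $h\mapsto b^{-1}hb$; $\operatorname{Fix}(\phi)=\{h\in H:\phi(h)=h\}$. For $\delta\in\operatorname{Aut}(H)$ and $a\in H$ with $\delta(K)=K$ and $\phi(\delta(k))=a^{-1}\delta(\phi(k))a$ for all $k\in K$, $\alpha_{(\delta,a)}$ denotes the automorphism of $G$ given by $h\mapsto\delta(h)$ ($h\in H$), $t\mapsto at$. $\operatorname{Out}_H^{(V)}(G)$ is the subgroup of $\operatorname{Out}(G)$ consisting of the outer classes of the automorphisms $\alpha_{(\gamma_b,a)}$, where $b\in N_H(K)$, $a\in H$ and $ba\phi(b)^{-1}\in C_H(\phi(K))$. Automorphisms are composed left to right. *)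

theory Defs
  imports "HOL-Algebra.Algebra"
begin

text \<open>Letters: Inl h is the generator h of H, Inr True is t, Inr False is t^-1.\<close>

type_synonym 'h hnn_word = "('h + bool) list"

definition hnn_words :: "('h, 'm) monoid_scheme \<Rightarrow> 'h hnn_word set" where
  "hnn_words H = {w. \<forall>h. Inl h \<in> set w \<longrightarrow> h \<in> carrier H}"

inductive hnn_step :: "('h, 'm) monoid_scheme \<Rightarrow> 'h set \<Rightarrow> ('h \<Rightarrow> 'h) \<Rightarrow> 'h hnn_word \<Rightarrow> 'h hnn_word \<Rightarrow> bool"
  for H K \<phi> where
  step_mult: "g \<in> carrier H \<Longrightarrow> h \<in> carrier H \<Longrightarrow>
     hnn_step H K \<phi> (u @ [Inl g, Inl h] @ v) (u @ [Inl (g \<otimes>\<^bsub>H\<^esub> h)] @ v)"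
| step_one: "hnn_step H K \<phi> (u @ [Inl \<one>\<^bsub>H\<^esub>] @ v) (u @ v)"
| t_tinv: "hnn_step H K \<phi> (u @ [Inr True, Inr False] @ v) (u @ v)"
| tinv_t: "hnn_step H K \<phi> (u @ [Inr False, Inr True] @ v) (u @ v)"
| step_conj: "k \<in> K \<Longrightarrow>
     hnn_step H K \<phi> (u @ [Inr True, Inl k, Inr False] @ v) (u @ [Inl (\<phi> k)] @ v)"

definition hnn_rel :: "('h, 'm) monoid_scheme \<Rightarrow> 'h set \<Rightarrow> ('h \<Rightarrow> 'h) \<Rightarrow> ('h hnn_word \<times> 'h hnn_word) set" where
  "hnn_rel H K \<phi> = {(u, v). u \<in> hnn_words H \<and> v \<in> hnn_words H \<and>
      (sup (hnn_step H K \<phi>) (hnn_step H K \<phi>)\<inverse>\<inverse>)\<^sup>*\<^sup>* u v}"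

definition HNN :: "('h, 'm) monoid_scheme \<Rightarrow> 'h set \<Rightarrow> ('h \<Rightarrow> 'h) \<Rightarrow> 'h hnn_word set monoid" where
  "HNN H K \<phi> = \<lparr> carrier = hnn_words H // hnn_rel H K \<phi>,
     monoid.mult = (\<lambda>A B. hnn_rel H K \<phi> `` {(SOME u. u \<in> A) @ (SOME v. v \<in> B)}),
     one = hnn_rel H K \<phi> `` {[]} \<rparr>"

section \<open>Aut, Inn, Out (automorphisms composed left to right)\<close>

definition Aut :: "('a, 'm) monoid_scheme \<Rightarrow> ('a \<Rightarrow> 'a) monoid" where
  "Aut G = \<lparr> carrier = {f. f \<in> iso G G \<and> f \<in> extensional (carrier G)},
     monoid.mult = (\<lambda>f g. restrict (g \<circ> f) (carrier G)),
     one = restrict id (carrier G) \<rparr>"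

definition Inn :: "('a, 'm) monoid_scheme \<Rightarrow> ('a \<Rightarrow> 'a) set" where
  "Inn G = {restrict (\<lambda>x. inv\<^bsub>G\<^esub> g \<otimes>\<^bsub>G\<^esub> x \<otimes>\<^bsub>G\<^esub> g) (carrier G) | g. g \<in> carrier G}"

definition Out :: "('a, 'm) monoid_scheme \<Rightarrow> ('a \<Rightarrow> 'a) set monoid" where
  "Out G = Aut G Mod Inn G"

definition hnn_letter_map :: "('h, 'm) monoid_scheme \<Rightarrow> ('h \<Rightarrow> 'h) \<Rightarrow> 'h \<Rightarrow> ('h + bool) \<Rightarrow> 'h hnn_word" where
  "hnn_letter_map H \<delta> a x = (case x of
      Inl h \<Rightarrow> [Inl (\<delta> h)]
    | Inr True \<Rightarrow> [Inl a, Inr True]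
    | Inr False \<Rightarrow> [Inr False, Inl (inv\<^bsub>H\<^esub> a)])"

definition hnn_alpha :: "('h, 'm) monoid_scheme \<Rightarrow> 'h set \<Rightarrow> ('h \<Rightarrow> 'h) \<Rightarrow> ('h \<Rightarrow> 'h) \<Rightarrow> 'h
     \<Rightarrow> 'h hnn_word set \<Rightarrow> 'h hnn_word set" where
  "hnn_alpha H K \<phi> \<delta> a =
     (\<lambda>C \<in> carrier (HNN H K \<phi>).
        hnn_rel H K \<phi> `` {concat (map (hnn_letter_map H \<delta> a) (SOME w. w \<in> C))})"

definition conjg :: "('h, 'm) monoid_scheme \<Rightarrow> 'h \<Rightarrow> 'h \<Rightarrow> 'h" where
  "conjg H b = (\<lambda>h. inv\<^bsub>H\<^esub> b \<otimes>\<^bsub>H\<^esub> h \<otimes>\<^bsub>H\<^esub> b)"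

definition centralizer :: "('h, 'm) monoid_scheme \<Rightarrow> 'h set \<Rightarrow> 'h set" where
  "centralizer H S = {g \<in> carrier H. \<forall>s \<in> S. g \<otimes>\<^bsub>H\<^esub> s = s \<otimes>\<^bsub>H\<^esub> g}"

definition center :: "('h, 'm) monoid_scheme \<Rightarrow> 'h set" where
  "center H = centralizer H (carrier H)"

definition Fix :: "('h, 'm) monoid_scheme \<Rightarrow> ('h \<Rightarrow> 'h) \<Rightarrow> 'h set" where
  "Fix H \<phi> = {h \<in> carrier H. \<phi> h = h}"

definition OutV :: "('h, 'm) monoid_scheme \<Rightarrow> 'h set \<Rightarrow> ('h \<Rightarrow> 'h) \<Rightarrow> ('h hnn_word set \<Rightarrow> 'h hnn_word set) set set" where
  "OutV H K \<phi> = {Inn (HNN H K \<phi>) #>\<^bsub>Aut (HNN H K \<phi>)\<^esub> hnn_alpha H K \<phi> (conjg H b) a | b a.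
      b \<in> normalizer H K \<and> a \<in> carrier H \<and>
      b \<otimes>\<^bsub>H\<^esub> a \<otimes>\<^bsub>H\<^esub> inv\<^bsub>H\<^esub> (\<phi> b) \<in> centralizer H (\<phi> ` K)}"

definition chi2 :: "('h, 'm) monoid_scheme \<Rightarrow> 'h set \<Rightarrow> ('h \<Rightarrow> 'h) \<Rightarrow> 'h \<Rightarrow> ('h hnn_word set \<Rightarrow> 'h hnn_word set) set" where
  "chi2 H K \<phi> b = Inn (HNN H K \<phi>) #>\<^bsub>Aut (HNN H K \<phi>)\<^esub>
      hnn_alpha H K \<phi> (conjg H b) (inv\<^bsub>H\<^esub> b \<otimes>\<^bsub>H\<^esub> \<phi> b)"

end

theory Submission
  imports Defs
begin

text \<open>For \<open>b \<in> N\<^sub>H(K)\<close> the automorphism \<open>\<alpha>\<^sub>b = \<alpha>\<^sub>(\<gamma>\<^sub>b, b\<inverse>\<phi>(b))\<close> acts on \<open>H\<close> as conjugation by \<open>b\<close>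
  and sends \<open>t\<close> to \<open>b\<inverse>\<phi>(b) t\<close>; composing the corresponding substitutions of words gives
  \<open>\<alpha>\<^sub>b \<alpha>\<^sub>b\<^sub>' = \<alpha>\<^sub>b\<^sub>b\<^sub>'\<close>, so \<open>b \<mapsto> [\<alpha>\<^sub>b]\<close> is a homomorphism to \<open>Out(G)\<close>. For \<open>j \<in> Z(H) \<inter> Fix(\<phi>)\<close> the
  map \<open>\<alpha>\<^sub>j\<close> is the identity, and for \<open>k \<in> K\<close> it is conjugation by \<open>k\<close> in \<open>G\<close>, so \<open>JK\<close> lies in the
  kernel. Conversely, if \<open>\<alpha>\<^sub>b\<close> is conjugation by \<open>g\<close>, then \<open>g b\<inverse>\<close> centralises \<open>H\<close>. By the normal form
  theorem for HNN extensions, the centraliser of \<open>H\<close> lies in \<open>H\<close> because \<open>K\<close> is proper, so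
  \<open>g = c b\<close> with \<open>c \<in> Z(H)\<close>. Comparing images of \<open>t\<close> gives \<open>t (c b) t\<inverse> = c \<phi>(b) \<in> H\<close>, and the normal form
  theorem again forces \<open>c b \<in> K\<close>; then \<open>\<phi>(c b) = c \<phi>(b)\<close> yields \<open>\<phi>(c) = c\<close>, and \<open>b = c\<inverse> (c b) \<in> JK\<close>.\<close>

section \<open>Automorphism groups\<close>

lemma Aut_carrier_iff: "f \<in> carrier (Aut G) \<longleftrightarrow> f \<in> iso G G \<and> f \<in> extensional (carrier G)"
  by (simp add: Aut_def)

lemma Aut_mult: "f \<otimes>\<^bsub>Aut G\<^esub> g = restrict (g \<circ> f) (carrier G)"
  by (simp add: Aut_def)

lemma Aut_one: "\<one>\<^bsub>Aut G\<^esub> = restrict id (carrier G)"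
  by (simp add: Aut_def)

lemma iso_in_carrier: "f \<in> iso G G \<Longrightarrow> x \<in> carrier G \<Longrightarrow> f x \<in> carrier G"
  by (meson iso_imp_homomorphism hom_in_carrier)

lemma Aut_group:
  assumes G: "group G"
  shows "group (Aut G)"
proof (rule groupI)
  interpret G: group G by (rule G)
  fix x y z
  show "\<one>\<^bsub>Aut G\<^esub> \<in> carrier (Aut G)"
    unfolding Aut_carrier_iff Aut_one
    by (auto intro: G.iso_eq[OF id_iso])
  {
    assume x: "x \<in> carrier (Aut G)" and y: "y \<in> carrier (Aut G)"
    have "y \<circ> x \<in> iso G G" using x y iso_set_trans[of x G G y G] by (simp add: Aut_carrier_iff)
    then show "x \<otimes>\<^bsub>Aut G\<^esub> y \<in> carrier (Aut G)"
      unfolding Aut_carrier_iff Aut_mult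
      by (auto intro: G.iso_eq)
  }
  {
    assume x: "x \<in> carrier (Aut G)" and y: "y \<in> carrier (Aut G)" and z: "z \<in> carrier (Aut G)"
    show "x \<otimes>\<^bsub>Aut G\<^esub> y \<otimes>\<^bsub>Aut G\<^esub> z = x \<otimes>\<^bsub>Aut G\<^esub> (y \<otimes>\<^bsub>Aut G\<^esub> z)"
      unfolding Aut_mult using x y
      by (auto simp: Aut_carrier_iff iso_in_carrier)
  }
  {
    assume x: "x \<in> carrier (Aut G)"
    show "\<one>\<^bsub>Aut G\<^esub> \<otimes>\<^bsub>Aut G\<^esub> x = x"
      unfolding Aut_mult Aut_one using x
      by (auto simp: Aut_carrier_iff extensional_def)
    let ?y = "restrict (inv_into (carrier G) x) (carrier G)"
    have xi: "x \<in> iso G G" using x by (simp add: Aut_carrier_iff)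
    then have bij: "bij_betw x (carrier G) (carrier G)" by (simp add: iso_def)
    have "?y \<in> carrier (Aut G)"
      unfolding Aut_carrier_iff using G.iso_set_sym[OF xi]
      by (auto intro: G.iso_eq)
    moreover have "?y \<otimes>\<^bsub>Aut G\<^esub> x = \<one>\<^bsub>Aut G\<^esub>"
      unfolding Aut_mult Aut_one using bij
      by (auto simp: bij_betw_inv_into_right)
    ultimately show "\<exists>y\<in>carrier (Aut G). y \<otimes>\<^bsub>Aut G\<^esub> x = \<one>\<^bsub>Aut G\<^esub>" by blast
  }
qed

definition inn_aut :: "('a, 'm) monoid_scheme \<Rightarrow> 'a \<Rightarrow> 'a \<Rightarrow> 'a" where
  "inn_aut G g = restrict (\<lambda>x. inv\<^bsub>G\<^esub> g \<otimes>\<^bsub>G\<^esub> x \<otimes>\<^bsub>G\<^esub> g) (carrier G)"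

lemma Inn_eq_inn_aut: "Inn G = {inn_aut G g | g. g \<in> carrier G}"
  by (simp add: Inn_def inn_aut_def)

context group begin

lemma m_inv_cancel_left [simp]:
  "x \<in> carrier G \<Longrightarrow> y \<in> carrier G \<Longrightarrow> x \<otimes> (inv x \<otimes> y) = y"
  by (simp add: m_assoc[symmetric])

lemma inv_m_cancel_left [simp]:
  "x \<in> carrier G \<Longrightarrow> y \<in> carrier G \<Longrightarrow> inv x \<otimes> (x \<otimes> y) = y"
  by (simp add: m_assoc[symmetric])

lemma commute_inv:
  assumes c: "c \<in> carrier G" and h: "h \<in> carrier G" and e: "c \<otimes> h = h \<otimes> c"
  shows "inv c \<otimes> h = h \<otimes> inv c"
proof -
  have "inv c \<otimes> (c \<otimes> h) \<otimes> inv c = inv c \<otimes> (h \<otimes> c) \<otimes> inv c" using e by simp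
  then show ?thesis using c h by (simp add: m_assoc)
qed

lemma inn_aut_iso: "g \<in> carrier G \<Longrightarrow> inn_aut G g \<in> iso G G"
proof -
  assume g: "g \<in> carrier G"
  have "group_isomorphisms G G (inn_aut G g) (inn_aut G (inv g))"
    unfolding group_isomorphisms_def hom_def inn_aut_def using g
    by (auto simp: m_assoc inv_mult_group)
  then show ?thesis by (rule group_isomorphisms_imp_iso)
qed

lemma inn_aut_Aut: "g \<in> carrier G \<Longrightarrow> inn_aut G g \<in> carrier (Aut G)"
  using inn_aut_iso by (simp add: Aut_carrier_iff) (simp add: inn_aut_def)

lemma inn_aut_mult: "g \<in> carrier G \<Longrightarrow> h \<in> carrier G \<Longrightarrow>
   inn_aut G g \<otimes>\<^bsub>Aut G\<^esub> inn_aut G h = inn_aut G (g \<otimes> h)"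
  unfolding Aut_mult inn_aut_def
  by (auto simp: m_assoc inv_mult_group)

lemma inn_aut_one: "inn_aut G \<one> = \<one>\<^bsub>Aut G\<^esub>"
  unfolding Aut_one inn_aut_def by auto

lemma inn_aut_inv: "g \<in> carrier G \<Longrightarrow> inv\<^bsub>Aut G\<^esub> (inn_aut G g) = inn_aut G (inv g)"
proof -
  assume g: "g \<in> carrier G"
  interpret A: group "Aut G" by (rule Aut_group) (rule is_group)
  show ?thesis
    by (rule A.inv_equality) (use g in \<open>simp_all add: inn_aut_mult inn_aut_one inn_aut_Aut\<close>)
qed

lemma Inn_normal: "Inn G \<lhd> Aut G"
proof -
  interpret A: group "Aut G" by (rule Aut_group) (rule is_group)
  have sub: "subgroup (Inn G) (Aut G)"
  proof (rule A.subgroupI)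
    show "Inn G \<subseteq> carrier (Aut G)" by (auto simp: Inn_eq_inn_aut inn_aut_Aut)
    show "Inn G \<noteq> {}" by (auto simp: Inn_eq_inn_aut)
    show "inv\<^bsub>Aut G\<^esub> a \<in> Inn G" if "a \<in> Inn G" for a
      using that by (auto simp: Inn_eq_inn_aut inn_aut_inv)
    show "a \<otimes>\<^bsub>Aut G\<^esub> b \<in> Inn G" if "a \<in> Inn G" "b \<in> Inn G" for a b
      using that by (auto simp: Inn_eq_inn_aut inn_aut_mult)
  qed
  have "x \<otimes>\<^bsub>Aut G\<^esub> h \<otimes>\<^bsub>Aut G\<^esub> inv\<^bsub>Aut G\<^esub> x \<in> Inn G"
    if x: "x \<in> carrier (Aut G)" and h: "h \<in> Inn G" for x h
  proof -
    obtain g where g: "g \<in> carrier G" and hg: "h = inn_aut G g" using h by (auto simp: Inn_eq_inn_aut)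
    define y where "y = inv\<^bsub>Aut G\<^esub> x"
    have y: "y \<in> carrier (Aut G)" using x by (simp add: y_def)
    have xy: "x \<otimes>\<^bsub>Aut G\<^esub> y = \<one>\<^bsub>Aut G\<^esub>" using x by (simp add: y_def)
    have yx: "y (x z) = z" if z: "z \<in> carrier G" for z
    proof -
      have "(x \<otimes>\<^bsub>Aut G\<^esub> y) z = \<one>\<^bsub>Aut G\<^esub> z" by (simp add: xy)
      then show "y (x z) = z" using z by (simp add: Aut_mult Aut_one)
    qed
    have yiso: "y \<in> iso G G" and xiso: "x \<in> iso G G"
      using x y by (auto simp: Aut_carrier_iff)
    interpret Y: group_hom G G y
      using yiso by (simp add: group_hom_def group_hom_axioms_def iso_imp_homomorphism is_group)
    have yg: "y g \<in> carrier G" using g by simp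
    have pt: "y (h (x z)) = inv (y g) \<otimes> z \<otimes> y g" if z: "z \<in> carrier G" for z
    proof -
      have xz: "x z \<in> carrier G" using z xiso by (simp add: iso_in_carrier)
      show ?thesis using z xz g yx by (simp add: hg inn_aut_def Y.hom_mult Y.hom_inv)
    qed
    have "x \<otimes>\<^bsub>Aut G\<^esub> h \<otimes>\<^bsub>Aut G\<^esub> y = inn_aut G (y g)"
      using xiso pt by (auto simp: Aut_mult iso_in_carrier inn_aut_def)
    then show ?thesis using yg by (auto simp: y_def Inn_eq_inn_aut)
  qed
  then show ?thesis using sub by (simp add: A.normal_inv_iff)
qed

end

section \<open>Coset representatives and normalizers\<close>

text \<open>The representative of \<open>h S\<close> is \<open>\<one>\<close> when \<open>h \<in> S\<close>; this normalisation is what makes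
  the letter \<open>\<one>\<close> detectable in normal forms.\<close>

definition lcoset_rep :: "('a, 'm) monoid_scheme \<Rightarrow> 'a set \<Rightarrow> 'a \<Rightarrow> 'a" where
  "lcoset_rep G S h = (if h \<in> S then \<one>\<^bsub>G\<^esub> else SOME c. c \<in> carrier G \<and> inv\<^bsub>G\<^esub> h \<otimes>\<^bsub>G\<^esub> c \<in> S)"

context group begin

lemma subgroup_inv_mult_swap:
  assumes S: "subgroup S G" and a: "a \<in> carrier G" and b: "b \<in> carrier G" and ab: "inv a \<otimes> b \<in> S"
  shows "inv b \<otimes> a \<in> S"
proof -
  have "inv (inv a \<otimes> b) \<in> S" using S ab by (rule subgroup.m_inv_closed)
  then show ?thesis using a b by (simp add: inv_mult_group)
qed

lemma subgroup_inv_mult_trans: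
  assumes S: "subgroup S G" and abc: "a \<in> carrier G" "b \<in> carrier G" "c \<in> carrier G"
    and ab: "inv a \<otimes> b \<in> S" and bc: "inv b \<otimes> c \<in> S"
  shows "inv a \<otimes> c \<in> S"
proof -
  have "(inv a \<otimes> b) \<otimes> (inv b \<otimes> c) \<in> S" using S ab bc by (rule subgroup.m_closed)
  then show ?thesis using abc by (simp add: m_assoc)
qed

lemma subgroup_mem_iff_inv_mult:
  assumes S: "subgroup S G" and ab: "inv a \<otimes> b \<in> S" and a: "a \<in> carrier G" and b: "b \<in> carrier G"
  shows "a \<in> S \<longleftrightarrow> b \<in> S"
proof
  assume "a \<in> S"
  then have "a \<otimes> (inv a \<otimes> b) \<in> S" using S ab by (simp add: subgroup.m_closed)
  then show "b \<in> S" using a b by simp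
next
  assume "b \<in> S"
  moreover have "inv b \<otimes> a \<in> S" using S a b ab by (rule subgroup_inv_mult_swap)
  ultimately have "b \<otimes> (inv b \<otimes> a) \<in> S" using S by (simp add: subgroup.m_closed)
  then show "a \<in> S" using a b by simp
qed

lemma lcoset_rep_props:
  assumes S: "subgroup S G" and h: "h \<in> carrier G"
  shows "lcoset_rep G S h \<in> carrier G \<and> inv h \<otimes> lcoset_rep G S h \<in> S"
proof (cases "h \<in> S")
  case True
  then show ?thesis using S h by (simp add: lcoset_rep_def subgroup.m_inv_closed)
next
  case False
  have "h \<in> carrier G \<and> inv h \<otimes> h \<in> S" using h S by (simp add: subgroup.one_closed)
  then have "(SOME c. c \<in> carrier G \<and> inv h \<otimes> c \<in> S) \<in> carrier G \<and>
      inv h \<otimes> (SOME c. c \<in> carrier G \<and> inv h \<otimes> c \<in> S) \<in> S"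
    by (rule someI)
  then show ?thesis using False by (simp add: lcoset_rep_def)
qed

lemma lcoset_rep_closed: "subgroup S G \<Longrightarrow> h \<in> carrier G \<Longrightarrow> lcoset_rep G S h \<in> carrier G"
  using lcoset_rep_props by blast

lemma lcoset_rep_mem: "subgroup S G \<Longrightarrow> h \<in> carrier G \<Longrightarrow> inv (lcoset_rep G S h) \<otimes> h \<in> S"
  using lcoset_rep_props subgroup_inv_mult_swap by blast

lemma lcoset_rep_eq:
  assumes S: "subgroup S G" and h1: "h1 \<in> carrier G" and h2: "h2 \<in> carrier G"
    and h12: "inv h1 \<otimes> h2 \<in> S"
  shows "lcoset_rep G S h1 = lcoset_rep G S h2"
proof -
  have iff: "h1 \<in> S \<longleftrightarrow> h2 \<in> S" using subgroup_mem_iff_inv_mult[OF S h12 h1 h2] .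
  have "(\<lambda>c. c \<in> carrier G \<and> inv h1 \<otimes> c \<in> S) = (\<lambda>c. c \<in> carrier G \<and> inv h2 \<otimes> c \<in> S)"
  proof (rule ext, rule iffI)
    fix c assume "c \<in> carrier G \<and> inv h1 \<otimes> c \<in> S"
    then show "c \<in> carrier G \<and> inv h2 \<otimes> c \<in> S"
      using subgroup_inv_mult_trans[OF S h2 h1 _ subgroup_inv_mult_swap[OF S h1 h2 h12]] by blast
  next
    fix c assume "c \<in> carrier G \<and> inv h2 \<otimes> c \<in> S"
    then show "c \<in> carrier G \<and> inv h1 \<otimes> c \<in> S"
      using subgroup_inv_mult_trans[OF S h1 h2 _ h12] by blast
  qed
  then show ?thesis using iff by (simp add: lcoset_rep_def)
qed

lemma lcoset_rep_eq_one_iff: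
  assumes S: "subgroup S G" and h: "h \<in> carrier G"
  shows "lcoset_rep G S h = \<one> \<longleftrightarrow> h \<in> S"
proof
  assume "lcoset_rep G S h = \<one>"
  then have "inv \<one> \<otimes> h \<in> S" using lcoset_rep_mem[OF S h] by simp
  then show "h \<in> S" using h by simp
qed (simp add: lcoset_rep_def)

lemma lcoset_rep_idem: "subgroup S G \<Longrightarrow> h \<in> carrier G \<Longrightarrow> lcoset_rep G S (lcoset_rep G S h) = lcoset_rep G S h"
  by (rule lcoset_rep_eq) (auto intro: lcoset_rep_closed lcoset_rep_mem)

lemma lcoset_rep_eqD:
  assumes S: "subgroup S G" and h: "h1 \<in> carrier G" "h2 \<in> carrier G"
    and e: "lcoset_rep G S h1 = lcoset_rep G S h2"
  shows "inv h1 \<otimes> h2 \<in> S"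
proof -
  have "inv h1 \<otimes> lcoset_rep G S h1 \<in> S" using lcoset_rep_props[OF S h(1)] by blast
  moreover have "inv (lcoset_rep G S h2) \<otimes> h2 \<in> S" using lcoset_rep_mem[OF S h(2)] .
  ultimately show ?thesis using subgroup_inv_mult_trans[OF S h(1) lcoset_rep_closed[OF S h(1)] h(2)] e by simp
qed

end

context group begin

lemma normalizer_mem_iff:
  "S \<subseteq> carrier G \<Longrightarrow> b \<in> normalizer G S \<longleftrightarrow> b \<in> carrier G \<and> b <# S #> inv b = S"
  by (simp add: normalizer_def stabilizer_def)

lemma normalizer_memI:
  assumes S: "S \<subseteq> carrier G" and b: "b \<in> carrier G"
    and c1: "\<And>k. k \<in> S \<Longrightarrow> b \<otimes> k \<otimes> inv b \<in> S"
    and c2: "\<And>k. k \<in> S \<Longrightarrow> inv b \<otimes> k \<otimes> b \<in> S"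
  shows "b \<in> normalizer G S"
proof -
  have "b <# S #> inv b = S"
  proof
    show "b <# S #> inv b \<subseteq> S" using c1 by (auto simp: l_coset_def r_coset_def)
    show "S \<subseteq> b <# S #> inv b"
    proof
      fix k assume k: "k \<in> S"
      have "k = b \<otimes> (inv b \<otimes> k \<otimes> b) \<otimes> inv b" using b k S by (auto simp: m_assoc)
      then show "k \<in> b <# S #> inv b" using c2[OF k] by (auto simp: l_coset_def r_coset_def)
    qed
  qed
  then show ?thesis using S b by (simp add: normalizer_mem_iff)
qed

lemma normalizer_memD:
  assumes S: "S \<subseteq> carrier G" and b: "b \<in> normalizer G S" and k: "k \<in> S"
  shows "inv b \<otimes> k \<otimes> b \<in> S"
proof -
  have bc: "b \<in> carrier G" and e: "b <# S #> inv b = S" using S b by (auto simp: normalizer_mem_iff)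
  have "k \<in> b <# S #> inv b" using k e by simp
  then obtain k' where k': "k' \<in> S" "k = b \<otimes> k' \<otimes> inv b" by (auto simp: l_coset_def r_coset_def)
  then have "inv b \<otimes> k \<otimes> b = k'" using bc S by (auto simp: m_assoc)
  then show ?thesis using k' by simp
qed

lemma subgroup_subset_normalizer: "subgroup S G \<Longrightarrow> S \<subseteq> normalizer G S"
  by (auto intro!: normalizer_memI subgroup.m_closed subgroup.m_inv_closed
      dest: subgroup.subset subgroup.mem_carrier)

lemma center_in_normalizer:
  assumes S: "S \<subseteq> carrier G"
  shows "center G \<subseteq> normalizer G S"
proof
  fix x assume "x \<in> center G"
  then have x: "x \<in> carrier G" and comm: "\<And>k. k \<in> carrier G \<Longrightarrow> x \<otimes> k = k \<otimes> x"
    by (auto simp: center_def centralizer_def)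
  have conj: "x \<otimes> k \<otimes> inv x = k \<and> inv x \<otimes> k \<otimes> x = k" if k: "k \<in> S" for k
  proof -
    have kc: "k \<in> carrier G" using k S by blast
    have "x \<otimes> k \<otimes> inv x = k \<otimes> x \<otimes> inv x" using comm[OF kc] by simp
    moreover have "inv x \<otimes> k \<otimes> x = inv x \<otimes> (x \<otimes> k)" using comm[OF kc] x kc by (simp add: m_assoc)
    ultimately show ?thesis using x kc by (simp add: m_assoc)
  qed
  show "x \<in> normalizer G S" using conj by (intro normalizer_memI[OF S x]) auto
qed

lemma conj_eq_imp_commute:
  assumes g: "g \<in> carrier G" and b: "b \<in> carrier G" and x: "x \<in> carrier G"
    and e: "inv g \<otimes> x \<otimes> g = inv b \<otimes> x \<otimes> b"
  shows "(g \<otimes> inv b) \<otimes> x = x \<otimes> (g \<otimes> inv b)"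
proof -
  have "g \<otimes> (inv g \<otimes> x \<otimes> g) \<otimes> inv b = g \<otimes> (inv b \<otimes> x \<otimes> b) \<otimes> inv b" using e by simp
  then show ?thesis using g b x by (simp add: m_assoc)
qed

end

type_synonym 'h nform = "('h \<times> bool) list \<times> 'h"

section \<open>The HNN extension is a group\<close>

locale hnn = H: group H for H :: "'h monoid" (structure) +
  fixes K :: "'h set" and \<phi> :: "'h \<Rightarrow> 'h"
  assumes K: "subgroup K H" and phi: "\<phi> \<in> iso H H"
begin

abbreviation W where "W \<equiv> hnn_words H"
abbreviation G where "G \<equiv> HNN H K \<phi>"
abbreviation step where "step \<equiv> hnn_step H K \<phi>"
abbreviation step_sym where "step_sym \<equiv> sup step step\<inverse>\<inverse>"
abbreviation related (infix "\<bowtie>" 50) where "u \<bowtie> v \<equiv> (u, v) \<in> hnn_rel H K \<phi>"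
abbreviation cls where "cls w \<equiv> hnn_rel H K \<phi> `` {w}"

lemma K_sub: "K \<subseteq> carrier H" using K by (rule subgroup.subset)

lemma K_carr: "k \<in> K \<Longrightarrow> k \<in> carrier H"
  using K_sub by blast

lemma phi_hom: "\<phi> \<in> hom H H" using phi by (rule iso_imp_homomorphism)

lemma phi_carr [simp]: "x \<in> carrier H \<Longrightarrow> \<phi> x \<in> carrier H"
  using phi_hom by (rule hom_in_carrier)

lemma phi_mult [simp]: "x \<in> carrier H \<Longrightarrow> y \<in> carrier H \<Longrightarrow> \<phi> (x \<otimes> y) = \<phi> x \<otimes> \<phi> y"
  using phi_hom by (simp add: hom_mult)

lemma phi_K [simp]: "k \<in> K \<Longrightarrow> \<phi> k \<in> carrier H"
  using K_sub by auto

lemma phi_group_hom: "group_hom H H \<phi>"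
  by (simp add: group_hom_def group_hom_axioms_def phi_hom H.is_group)

lemma phi_one [simp]: "\<phi> \<one> = \<one>"
  using phi_group_hom by (simp add: group_hom.hom_one)

lemma phi_inv: "x \<in> carrier H \<Longrightarrow> \<phi> (inv x) = inv (\<phi> x)"
  using phi_group_hom by (simp add: group_hom.hom_inv)

lemma words_simps [simp]:
  "[] \<in> W"
  "(Inl h # w \<in> W) \<longleftrightarrow> h \<in> carrier H \<and> w \<in> W"
  "(Inr b # w \<in> W) \<longleftrightarrow> w \<in> W"
  "(u @ v \<in> W) \<longleftrightarrow> u \<in> W \<and> v \<in> W"
  by (auto simp: hnn_words_def)

lemma step_append:
  assumes "step x y" shows "step (p @ x @ q) (p @ y @ q)"
  using assms
proof cases
  case (step_mult g h u v)
  then show ?thesis using hnn_step.step_mult[of g H h K \<phi> "p @ u" "v @ q"] by simp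
next
  case (step_one u v)
  then show ?thesis using hnn_step.step_one[of H K \<phi> "p @ u" "v @ q"] by simp
next
  case (t_tinv u v)
  then show ?thesis using hnn_step.t_tinv[of H K \<phi> "p @ u" "v @ q"] by simp
next
  case (tinv_t u v)
  then show ?thesis using hnn_step.tinv_t[of H K \<phi> "p @ u" "v @ q"] by simp
next
  case (step_conj k u v)
  then show ?thesis using hnn_step.step_conj[of k K H \<phi> "p @ u" "v @ q"] by simp
qed

lemma step_words_iff: assumes "step x y" shows "x \<in> W \<longleftrightarrow> y \<in> W"
  using assms
proof cases
  case (step_mult g h u v)
  then show ?thesis by auto
next
  case (step_conj k u v)
  then show ?thesis using K_sub by auto
qed auto

lemma rel_iff: "u \<bowtie> v \<longleftrightarrow> u \<in> W \<and> v \<in> W \<and> step_sym\<^sup>*\<^sup>* u v"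
  by (simp add: hnn_rel_def)

lemma rel_W: "u \<bowtie> v \<Longrightarrow> u \<in> W" "u \<bowtie> v \<Longrightarrow> v \<in> W"
  by (auto simp: rel_iff)

lemma rel_refl: "w \<in> W \<Longrightarrow> w \<bowtie> w"
  by (simp add: rel_iff)

lemma step_sym_symmetric: "step_sym\<^sup>*\<^sup>* u v \<Longrightarrow> step_sym\<^sup>*\<^sup>* v u"
proof -
  have "(sup step step\<inverse>\<inverse>)\<inverse>\<inverse> = sup step step\<inverse>\<inverse>" by (auto simp: fun_eq_iff)
  then show "step_sym\<^sup>*\<^sup>* u v \<Longrightarrow> step_sym\<^sup>*\<^sup>* v u"
    by (metis rtranclp_converseD rtranclp_converseI)
qed

lemma rel_sym: "u \<bowtie> v \<Longrightarrow> v \<bowtie> u"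
  by (auto simp: rel_iff intro: step_sym_symmetric)

lemma rel_trans [trans]: "u \<bowtie> v \<Longrightarrow> v \<bowtie> w \<Longrightarrow> u \<bowtie> w"
  by (auto simp: rel_iff)

lemma rel_induct [consumes 1, case_names step refl sym trans]:
  assumes uv: "u \<bowtie> v"
    and st: "\<And>x y. step x y \<Longrightarrow> x \<in> W \<Longrightarrow> Q x y"
    and refl: "\<And>x. x \<in> W \<Longrightarrow> Q x x"
    and sym: "\<And>x y. Q x y \<Longrightarrow> Q y x"
    and trans: "\<And>x y z. Q x y \<Longrightarrow> Q y z \<Longrightarrow> Q x z"
  shows "Q u v"
proof -
  have u: "u \<in> W" and ss: "step_sym\<^sup>*\<^sup>* u v" using uv by (auto simp: rel_iff)
  have "y \<in> W \<and> Q u y" if "step_sym\<^sup>*\<^sup>* u y" for y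
    using that
  proof (induction rule: rtranclp_induct)
    case base
    then show ?case using u refl by simp
  next
    case (step y y')
    then have y: "y \<in> W" and uy: "Q u y" by auto
    from step.hyps(2) show ?case
    proof
      assume "step y y'"
      then show ?thesis using y uy st trans step_words_iff by blast
    next
      assume "step\<inverse>\<inverse> y y'"
      then have s: "step y' y" by simp
      then have "y' \<in> W" using y step_words_iff by blast
      then show ?thesis using s uy st sym trans by blast
    qed
  qed
  then show ?thesis using ss by blast
qed

lemma equiv_rel: "equiv W (hnn_rel H K \<phi>)"
  by (rule equivI) (auto simp: refl_on_def sym_def trans_def rel_refl intro: rel_sym rel_trans dest: rel_W)

lemma step_sym_append: "step_sym\<^sup>*\<^sup>* x y \<Longrightarrow> step_sym\<^sup>*\<^sup>* (p @ x @ q) (p @ y @ q)"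
proof (induction rule: rtranclp_induct)
  case (step y z)
  then have "step_sym (p @ y @ q) (p @ z @ q)" by (auto intro: step_append)
  then show ?case using step.IH by (meson rtranclp.rtrancl_into_rtrancl)
qed simp

lemma rel_app: "u \<bowtie> u' \<Longrightarrow> v \<bowtie> v' \<Longrightarrow> u @ v \<bowtie> u' @ v'"
proof -
  assume a: "u \<bowtie> u'" "v \<bowtie> v'"
  then have "step_sym\<^sup>*\<^sup>* (u @ v) (u' @ v)" using step_sym_append[of u u' "[]" v] by (simp add: rel_iff)
  moreover have "step_sym\<^sup>*\<^sup>* (u' @ v) (u' @ v')" using a step_sym_append[of v v' u' "[]"] by (simp add: rel_iff)
  ultimately show ?thesis using a by (auto simp: rel_iff)
qed

lemma rel_app_left: "v \<bowtie> v' \<Longrightarrow> u \<in> W \<Longrightarrow> u @ v \<bowtie> u @ v'"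
  by (rule rel_app) (auto intro: rel_refl)

lemma rel_app_right: "u \<bowtie> u' \<Longrightarrow> v \<in> W \<Longrightarrow> u @ v \<bowtie> u' @ v"
  by (rule rel_app) (auto intro: rel_refl)

lemma step_rel: "step x y \<Longrightarrow> x \<in> W \<Longrightarrow> x \<bowtie> y"
  using step_words_iff by (auto simp: rel_iff)

lemma rel_mult: "g \<in> carrier H \<Longrightarrow> h \<in> carrier H \<Longrightarrow> [Inl g, Inl h] \<bowtie> [Inl (g \<otimes> h)]"
  using step_rel[OF hnn_step.step_mult[of g H h K \<phi> "[]" "[]"]] by simp

lemma rel_one: "[Inl \<one>] \<bowtie> []"
  using step_rel[OF hnn_step.step_one[of H K \<phi> "[]" "[]"]] by simp

lemma rel_stable_cancel: "[Inr e, Inr (\<not> e)] \<bowtie> []"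
  using step_rel[OF hnn_step.t_tinv[of H K \<phi> "[]" "[]"]] step_rel[OF hnn_step.tinv_t[of H K \<phi> "[]" "[]"]]
  by (cases e) auto

lemma rel_stable_swap: "k \<in> K \<Longrightarrow> [Inl (\<phi> k), Inr True] \<bowtie> [Inr True, Inl k]"
proof -
  assume k: "k \<in> K"
  have "[Inr True, Inl k] \<bowtie> [Inr True, Inl k] @ [Inr False, Inr True] @ []"
    using rel_sym[OF step_rel[OF hnn_step.tinv_t[of H K \<phi> "[Inr True, Inl k]" "[]"]]] k K_carr
    by simp
  also have "[Inr True, Inl k] @ [Inr False, Inr True] @ [] \<bowtie> [Inl (\<phi> k), Inr True]"
    using step_rel[OF hnn_step.step_conj[OF k, of H \<phi> "[]" "[Inr True]"]] k K_carr by simp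
  finally show ?thesis by (rule rel_sym)
qed

lemma rel_stable_inv_swap: "k \<in> K \<Longrightarrow> [Inl k, Inr False] \<bowtie> [Inr False, Inl (\<phi> k)]"
proof -
  assume k: "k \<in> K"
  have "[Inl k, Inr False] \<bowtie> [] @ [Inr False, Inr True] @ [Inl k, Inr False]"
    using rel_sym[OF step_rel[OF hnn_step.tinv_t[of H K \<phi> "[]" "[Inl k, Inr False]"]]] k K_carr
    by simp
  also have "[] @ [Inr False, Inr True] @ [Inl k, Inr False] \<bowtie> [Inr False, Inl (\<phi> k)]"
    using step_rel[OF hnn_step.step_conj[OF k, of H \<phi> "[Inr False]" "[]"]] k K_carr by simp
  finally show ?thesis .
qed

lemma rel_one_Cons: "w \<in> W \<Longrightarrow> Inl \<one> # w \<bowtie> w"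
  using rel_app_right[OF rel_one, of w] by simp

lemma cls_eq_iff: "u \<in> W \<Longrightarrow> v \<in> W \<Longrightarrow> cls u = cls v \<longleftrightarrow> u \<bowtie> v"
  using equiv_class_eq_iff[OF equiv_rel, of u v] by blast

lemma carrier_G: "carrier G = cls ` W"
  by (simp add: HNN_def quotient_def UNION_singleton_eq_range)

lemma cls_in_G [simp]: "w \<in> W \<Longrightarrow> cls w \<in> carrier G"
  by (simp add: carrier_G)

lemma some_cls: "w \<in> W \<Longrightarrow> w \<bowtie> (SOME u. u \<in> cls w)"
proof -
  assume w: "w \<in> W"
  then have "w \<in> cls w" by (simp add: rel_refl)
  then have "(SOME u. u \<in> cls w) \<in> cls w" by (rule someI)
  then show ?thesis by simp
qed

lemma cls_eq: "u \<bowtie> v \<Longrightarrow> cls u = cls v"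
  using cls_eq_iff[OF rel_W(1) rel_W(2)] by blast

lemma mult_cls: "u \<in> W \<Longrightarrow> v \<in> W \<Longrightarrow> cls u \<otimes>\<^bsub>G\<^esub> cls v = cls (u @ v)"
proof -
  assume u: "u \<in> W" and v: "v \<in> W"
  have "(SOME x. x \<in> cls u) @ (SOME x. x \<in> cls v) \<bowtie> u @ v"
    using rel_app[OF rel_sym[OF some_cls[OF u]] rel_sym[OF some_cls[OF v]]] .
  then show ?thesis by (simp add: HNN_def cls_eq)
qed

lemma one_G: "\<one>\<^bsub>G\<^esub> = cls []"
  by (simp add: HNN_def)

fun inv_letter :: "'h + bool \<Rightarrow> 'h + bool" where
  "inv_letter (Inl h) = Inl (inv h)"
| "inv_letter (Inr b) = Inr (\<not> b)"

definition inv_word :: "'h hnn_word \<Rightarrow> 'h hnn_word" where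
  "inv_word w = rev (map inv_letter w)"

lemma inv_word_words: "w \<in> W \<Longrightarrow> inv_word w \<in> W"
proof (induction w)
  case (Cons a w)
  then show ?case by (cases a) (auto simp: inv_word_def)
qed (simp add: inv_word_def)

lemma rel_inv_letter: "[a] \<in> W \<Longrightarrow> [inv_letter a, a] \<bowtie> []"
proof (cases a)
  case (Inl h)
  assume "[a] \<in> W"
  then have h: "h \<in> carrier H" using Inl by simp
  have "[Inl (inv h), Inl h] \<bowtie> [Inl \<one>]" using rel_mult[of "inv h" h] h by simp
  also have "[Inl \<one>] \<bowtie> []" by (rule rel_one)
  finally show ?thesis using Inl by simp
next
  case (Inr b)
  then show ?thesis using rel_stable_cancel[of "\<not> b"] by simp
qed

lemma rel_inv_word: "w \<in> W \<Longrightarrow> inv_word w @ w \<bowtie> []"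
proof (induction w)
  case Nil
  then show ?case by (simp add: inv_word_def rel_refl)
next
  case (Cons a w)
  have aW: "[a] \<in> W" and wW: "w \<in> W" using Cons.prems words_simps(4)[of "[a]" w] by auto
  have e: "inv_word (a # w) @ a # w = inv_word w @ [inv_letter a, a] @ w" by (simp add: inv_word_def)
  have "inv_word w @ [inv_letter a, a] @ w \<bowtie> inv_word w @ [] @ w"
    using rel_inv_letter[OF aW] inv_word_words[OF wW] wW by (intro rel_app_left rel_app_right) auto
  moreover have "inv_word w @ [] @ w \<bowtie> []" using Cons.IH wW by simp
  ultimately show ?case unfolding e by (rule rel_trans)
qed

lemma group_G: "group G"
proof (rule groupI)
  show "\<one>\<^bsub>G\<^esub> \<in> carrier G" by (simp add: one_G)
next
  fix x y assume "x \<in> carrier G" "y \<in> carrier G"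
  then obtain u v where "u \<in> W" "v \<in> W" "x = cls u" "y = cls v" by (auto simp: carrier_G)
  then show "x \<otimes>\<^bsub>G\<^esub> y \<in> carrier G" by (simp add: mult_cls)
next
  fix x y z assume "x \<in> carrier G" "y \<in> carrier G" "z \<in> carrier G"
  then obtain u v w where "u \<in> W" "v \<in> W" "w \<in> W" "x = cls u" "y = cls v" "z = cls w"
    by (auto simp: carrier_G)
  then show "x \<otimes>\<^bsub>G\<^esub> y \<otimes>\<^bsub>G\<^esub> z = x \<otimes>\<^bsub>G\<^esub> (y \<otimes>\<^bsub>G\<^esub> z)" by (simp add: mult_cls)
next
  fix x assume "x \<in> carrier G"
  then obtain u where "u \<in> W" "x = cls u" by (auto simp: carrier_G)
  then show "\<one>\<^bsub>G\<^esub> \<otimes>\<^bsub>G\<^esub> x = x" by (simp add: mult_cls one_G)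
next
  fix x assume "x \<in> carrier G"
  then obtain w where w: "w \<in> W" and x: "x = cls w" by (auto simp: carrier_G)
  have "cls (inv_word w) \<otimes>\<^bsub>G\<^esub> x = \<one>\<^bsub>G\<^esub>"
    using w x inv_word_words[OF w] rel_inv_word[OF w] by (simp add: mult_cls one_G cls_eq)
  then show "\<exists>y\<in>carrier G. y \<otimes>\<^bsub>G\<^esub> x = \<one>\<^bsub>G\<^esub>" using inv_word_words[OF w] by auto
qed

sublocale Gp: group G by (rule group_G)

lemma hom_eq_on_letters:
  assumes grp: "group G'" and f: "f \<in> hom G G'" and g: "g \<in> hom G G'"
    and letters: "\<And>l. [l] \<in> W \<Longrightarrow> f (cls [l]) = g (cls [l])"
    and C: "C \<in> carrier G"
  shows "f C = g C"
proof -
  interpret f: group_hom G G' f using grp f by (simp add: group_hom_def group_hom_axioms_def Gp.is_group)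
  interpret g: group_hom G G' g using grp g by (simp add: group_hom_def group_hom_axioms_def Gp.is_group)
  obtain w where w: "w \<in> W" and Cw: "C = cls w" using C by (auto simp: carrier_G)
  have "f (cls w) = g (cls w)" using w
  proof (induction w)
    case Nil
    show ?case using f.hom_one g.hom_one by (simp add: one_G)
  next
    case (Cons l w)
    then have lw: "[l] \<in> W" "w \<in> W" using words_simps(4)[of "[l]" w] by auto
    then have "cls (l # w) = cls [l] \<otimes>\<^bsub>G\<^esub> cls w" by (simp add: mult_cls)
    then show ?case using lw Cons.IH letters[OF lw(1)] by (simp add: f.hom_mult g.hom_mult)
  qed
  then show ?thesis using Cw by simp
qed

abbreviation emb where "emb h \<equiv> cls [Inl h]"
abbreviation stable where "stable \<equiv> cls [Inr True]"
abbreviation stable_inv where "stable_inv \<equiv> cls [Inr False]"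

lemma emb_closed [simp]: "h \<in> carrier H \<Longrightarrow> emb h \<in> carrier G" by simp
lemma stable_closed [simp]: "stable \<in> carrier G" by simp

lemma emb_mult: "g \<in> carrier H \<Longrightarrow> h \<in> carrier H \<Longrightarrow> emb (g \<otimes> h) = emb g \<otimes>\<^bsub>G\<^esub> emb h"
  using cls_eq[OF rel_mult[of g h]] by (simp add: mult_cls)

lemma emb_one: "emb \<one> = \<one>\<^bsub>G\<^esub>"
  using rel_one by (simp add: one_G cls_eq)

lemma stable_mult_inv: "stable \<otimes>\<^bsub>G\<^esub> stable_inv = \<one>\<^bsub>G\<^esub>"
  using rel_stable_cancel[of True] by (simp add: mult_cls one_G cls_eq)

lemma stable_inv_mult: "stable_inv \<otimes>\<^bsub>G\<^esub> stable = \<one>\<^bsub>G\<^esub>"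
  using rel_stable_cancel[of False] by (simp add: mult_cls one_G cls_eq)

lemma stable_emb: "k \<in> K \<Longrightarrow> stable \<otimes>\<^bsub>G\<^esub> emb k = emb (\<phi> k) \<otimes>\<^bsub>G\<^esub> stable"
  using rel_stable_swap[of k] K_carr[of k] by (simp add: mult_cls cls_eq)

lemma emb_stable_inv: "k \<in> K \<Longrightarrow> emb k \<otimes>\<^bsub>G\<^esub> stable_inv = stable_inv \<otimes>\<^bsub>G\<^esub> emb (\<phi> k)"
  using rel_stable_inv_swap[of k] K_carr[of k] by (simp add: mult_cls cls_eq)

lemma emb_inv: "h \<in> carrier H \<Longrightarrow> inv\<^bsub>G\<^esub> (emb h) = emb (inv h)"
  by (rule Gp.inv_equality) (simp_all add: emb_mult[symmetric] emb_one)

lemma stable_conj_K: "k \<in> K \<Longrightarrow> stable \<otimes>\<^bsub>G\<^esub> emb k \<otimes>\<^bsub>G\<^esub> stable_inv = emb (\<phi> k)"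
  using K_carr[of k] by (simp add: stable_emb Gp.m_assoc stable_mult_inv)

section \<open>Normal forms\<close>

text \<open>A normal form \<open>([(c\<^sub>1, e\<^sub>1), \<dots>, (c\<^sub>n, e\<^sub>n)], h)\<close> stands for the word
  \<open>c\<^sub>1 t^e\<^sub>1 \<cdots> c\<^sub>n t^e\<^sub>n h\<close> (see \<open>nf_word\<close>; \<open>True\<close> is \<open>t\<close>, \<open>False\<close> is \<open>t\<inverse>\<close>), where every
  \<open>c\<^sub>i\<close> is the chosen representative of \<open>c\<^sub>i (assoc e\<^sub>i)\<close> and no \<open>t^e \<one> t^-e\<close> occurs.
  The subgroup \<open>assoc e\<close> is what can be moved across \<open>t^e\<close>, turning into \<open>pass e\<close> of itself.
  Left multiplication by letters acts on normal forms; since the action respects the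
  defining relations, equal elements of \<open>G\<close> have equal normal forms (van der Waerden's trick).\<close>

definition assoc :: "bool \<Rightarrow> 'h set" where "assoc e = (if e then \<phi> ` K else K)"

lemma assoc_subgroup: "subgroup (assoc e) H"
  using K group_hom.subgroup_img_is_subgroup[OF phi_group_hom K] by (simp add: assoc_def)

lemma assoc_closed: "s \<in> assoc e \<Longrightarrow> s \<in> carrier H"
  using subgroup.mem_carrier[OF assoc_subgroup] .

abbreviation rep where "rep e h \<equiv> lcoset_rep H (assoc e) h"

definition phi_inverse where "phi_inverse = inv_into (carrier H) \<phi>"

lemma phi_inj: "inj_on \<phi> (carrier H)" using phi by (simp add: iso_iff)

lemma phi_inverse_phi [simp]: "x \<in> carrier H \<Longrightarrow> phi_inverse (\<phi> x) = x"
  unfolding phi_inverse_def using phi_inj by (rule inv_into_f_f)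

lemma phi_inverse_image_K: "s \<in> \<phi> ` K \<Longrightarrow> phi_inverse s \<in> K \<and> \<phi> (phi_inverse s) = s"
proof -
  assume "s \<in> \<phi> ` K"
  then obtain k where k: "k \<in> K" "s = \<phi> k" by blast
  then show ?thesis using phi_inverse_phi[OF K_carr[OF k(1)]] by simp
qed

definition pass :: "bool \<Rightarrow> 'h \<Rightarrow> 'h" where "pass e s = (if e then phi_inverse s else \<phi> s)"

lemma pass_mem: "s \<in> assoc e \<Longrightarrow> pass e s \<in> assoc (\<not> e)"
proof (cases e)
  case True
  assume "s \<in> assoc e"
  then show ?thesis using True phi_inverse_image_K[of s] by (simp add: assoc_def pass_def)
next
  case False
  assume "s \<in> assoc e"
  then show ?thesis using False by (simp add: assoc_def pass_def)
qed

lemma pass_closed: "s \<in> assoc e \<Longrightarrow> pass e s \<in> carrier H"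
  using pass_mem assoc_closed by blast

lemma pass_mult: "s1 \<in> assoc e \<Longrightarrow> s2 \<in> assoc e \<Longrightarrow> pass e (s1 \<otimes> s2) = pass e s1 \<otimes> pass e s2"
proof (cases e)
  case True
  assume s: "s1 \<in> assoc e" "s2 \<in> assoc e"
  then obtain k1 k2 where k: "k1 \<in> K" "k2 \<in> K" "s1 = \<phi> k1" "s2 = \<phi> k2"
    using True by (auto simp: assoc_def)
  have kc: "k1 \<in> carrier H" "k2 \<in> carrier H" using k K_carr by auto
  have "s1 \<otimes> s2 = \<phi> (k1 \<otimes> k2)" using kc k by simp
  then have "pass e (s1 \<otimes> s2) = k1 \<otimes> k2" using True kc phi_inverse_phi[of "k1 \<otimes> k2"] by (simp add: pass_def)
  moreover have "pass e s1 = k1" "pass e s2 = k2" using True kc k by (simp_all add: pass_def)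
  ultimately show ?thesis by simp
next
  case False
  assume s: "s1 \<in> assoc e" "s2 \<in> assoc e"
  then have "s1 \<in> carrier H" "s2 \<in> carrier H" using assoc_closed by auto
  then show ?thesis using False by (simp add: pass_def)
qed

lemma pass_one [simp]: "pass e \<one> = \<one>"
  using phi_inverse_phi[of \<one>] by (simp add: pass_def)

fun act_H :: "'h \<Rightarrow> ('h \<times> bool) list \<Rightarrow> 'h \<Rightarrow> 'h nform" where
  "act_H h [] t = ([], h \<otimes> t)"
| "act_H h ((c, e) # xs) t =
    (let c' = rep e (h \<otimes> c); r = act_H (pass e (inv c' \<otimes> (h \<otimes> c))) xs t in ((c', e) # fst r, snd r))"

definition act_t :: "bool \<Rightarrow> 'h nform \<Rightarrow> 'h nform" where
  "act_t e x = (case fst x of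
      (c, e') # rest \<Rightarrow> (if c = \<one> \<and> e' = (\<not> e) then (rest, snd x) else ((\<one>, e) # fst x, snd x))
    | [] \<Rightarrow> ([(\<one>, e)], snd x))"

fun act_letter :: "'h + bool \<Rightarrow> 'h nform \<Rightarrow> 'h nform" where
  "act_letter (Inl h) x = act_H h (fst x) (snd x)"
| "act_letter (Inr e) x = act_t e x"

definition act_word :: "'h hnn_word \<Rightarrow> 'h nform \<Rightarrow> 'h nform" where
  "act_word w x = foldr act_letter w x"

fun reduced :: "('h \<times> bool) list \<Rightarrow> bool" where
  "reduced [] = True"
| "reduced ((c, e) # xs) = (c \<in> carrier H \<and> rep e c = c \<and> reduced xs \<and>
      (case xs of [] \<Rightarrow> True | (c', e') # _ \<Rightarrow> (c' = \<one> \<longrightarrow> e' = e)))"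

definition normal_form :: "'h nform \<Rightarrow> bool" where
  "normal_form x \<longleftrightarrow> reduced (fst x) \<and> snd x \<in> carrier H"

lemma reduced_closed: "reduced xs \<Longrightarrow> (c, e) \<in> set xs \<Longrightarrow> c \<in> carrier H"
  by (induction xs rule: reduced.induct) auto

lemma rep_mem: "h \<in> carrier H \<Longrightarrow> inv (rep e h) \<otimes> h \<in> assoc e"
  by (rule H.lcoset_rep_mem[OF assoc_subgroup])

lemma rep_closed: "h \<in> carrier H \<Longrightarrow> rep e h \<in> carrier H"
  by (rule H.lcoset_rep_closed[OF assoc_subgroup])

lemma rep_mult_eq_one_iff:
  assumes s: "s \<in> assoc e" and c: "c \<in> carrier H"
  shows "rep e (s \<otimes> c) = \<one> \<longleftrightarrow> rep e c = \<one>"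
proof -
  have sc: "s \<in> carrier H" using s assoc_closed by blast
  have "s \<otimes> c \<in> assoc e \<longleftrightarrow> c \<in> assoc e"
  proof
    assume "s \<otimes> c \<in> assoc e"
    then have "inv s \<otimes> (s \<otimes> c) \<in> assoc e"
      using s assoc_subgroup subgroup.m_closed subgroup.m_inv_closed by metis
    then show "c \<in> assoc e" using sc c by simp
  qed (use s assoc_subgroup subgroup.m_closed in metis)
  then show ?thesis using sc c by (simp add: H.lcoset_rep_eq_one_iff[OF assoc_subgroup])
qed

lemma act_H_reduced:
  "reduced xs \<Longrightarrow> h \<in> carrier H \<Longrightarrow> t \<in> carrier H \<Longrightarrow> reduced (fst (act_H h xs t)) \<and> snd (act_H h xs t) \<in> carrier H"
proof (induction h xs t rule: act_H.induct)
  case (1 h t)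
  then show ?case by simp
next
  case (2 h c e xs t)
  define c' where "c' = rep e (h \<otimes> c)"
  define p where "p = pass e (inv c' \<otimes> (h \<otimes> c))"
  have c: "c \<in> carrier H" using "2.prems" by simp
  have hc: "h \<otimes> c \<in> carrier H" using c "2.prems" by simp
  have c'c: "c' \<in> carrier H" using hc by (simp add: c'_def rep_closed)
  have s: "inv c' \<otimes> (h \<otimes> c) \<in> assoc e" using hc by (simp add: c'_def rep_mem)
  have pm: "p \<in> assoc (\<not> e)" using s by (simp add: p_def pass_mem)
  have p: "p \<in> carrier H" using pm assoc_closed by blast
  have IH: "reduced (fst (act_H p xs t)) \<and> snd (act_H p xs t) \<in> carrier H"
    using "2.IH"[OF c'_def] "2.prems" p by (simp add: p_def)
  have idem: "rep e c' = c'" using hc by (simp add: c'_def H.lcoset_rep_idem[OF assoc_subgroup])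
  have pinch: "case fst (act_H p xs t) of [] \<Rightarrow> True | (c2', e2) # _ \<Rightarrow> (c2' = \<one> \<longrightarrow> e2 = e)"
  proof (cases xs)
    case Nil
    then show ?thesis by simp
  next
    case (Cons a r)
    obtain c2 e2 where a: "a = (c2, e2)" by (cases a)
    have c2: "c2 \<in> carrier H" and rc2: "rep e2 c2 = c2" and pc2: "c2 = \<one> \<longrightarrow> e2 = e"
      using "2.prems"(1) Cons a by auto
    have "rep e2 (p \<otimes> c2) = \<one> \<longrightarrow> e2 = e"
    proof (rule impI, rule ccontr)
      assume r1: "rep e2 (p \<otimes> c2) = \<one>" and ne: "e2 \<noteq> e"
      then have "p \<in> assoc e2" using pm by (cases e2) auto
      then have "c2 = \<one>" using r1 rc2 rep_mult_eq_one_iff c2 by metis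
      then show False using pc2 ne by simp
    qed
    then show ?thesis using Cons a by (simp add: Let_def)
  qed
  have e1: "fst (act_H h ((c, e) # xs) t) = (c', e) # fst (act_H p xs t)"
    by (simp add: Let_def c'_def p_def)
  have e2: "snd (act_H h ((c, e) # xs) t) = snd (act_H p xs t)"
    by (simp add: Let_def c'_def p_def)
  show ?case unfolding e1 e2 using IH c'c idem pinch by simp
qed

lemma one_in_assoc [simp]: "\<one> \<in> assoc e"
  using subgroup.one_closed[OF assoc_subgroup] .

lemma rep_eq_one: "h \<in> assoc e \<Longrightarrow> rep e h = \<one>"
  by (simp add: lcoset_rep_def)

lemma reduced_closed_all: "reduced xs \<Longrightarrow> \<forall>p\<in>set xs. fst p \<in> carrier H"
  using reduced_closed by fastforce

lemma act_H_mult: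
  "\<forall>p\<in>set xs. fst p \<in> carrier H \<Longrightarrow> g \<in> carrier H \<Longrightarrow> h \<in> carrier H \<Longrightarrow> t \<in> carrier H \<Longrightarrow>
   act_H g (fst (act_H h xs t)) (snd (act_H h xs t)) = act_H (g \<otimes> h) xs t"
proof (induction xs arbitrary: g h)
  case Nil
  then show ?case by (simp add: H.m_assoc)
next
  case (Cons a xs)
  obtain c e where a: "a = (c, e)" by (cases a)
  have c: "c \<in> carrier H" using Cons.prems a by simp
  have g: "g \<in> carrier H" and h: "h \<in> carrier H" and t: "t \<in> carrier H" using Cons.prems by auto
  define c1 where "c1 = rep e (h \<otimes> c)"
  define s1 where "s1 = inv c1 \<otimes> (h \<otimes> c)"
  define c2 where "c2 = rep e (g \<otimes> c1)"
  define s2 where "s2 = inv c2 \<otimes> (g \<otimes> c1)"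
  define s3 where "s3 = inv c2 \<otimes> (g \<otimes> h \<otimes> c)"
  have c1: "c1 \<in> carrier H" using c h by (simp add: c1_def rep_closed)
  have c2: "c2 \<in> carrier H" using c1 g by (simp add: c2_def rep_closed)
  have s1: "s1 \<in> assoc e" using c h by (simp add: s1_def c1_def rep_mem)
  have s2: "s2 \<in> assoc e" using c1 g by (simp add: s2_def c2_def rep_mem)
  have c3: "rep e (g \<otimes> h \<otimes> c) = c2"
  proof -
    have "inv (g \<otimes> c1) \<otimes> (g \<otimes> h \<otimes> c) = s1"
      using g h c c1 by (simp add: s1_def H.m_assoc H.inv_mult_group)
    then have "rep e (g \<otimes> c1) = rep e (g \<otimes> h \<otimes> c)"
      using H.lcoset_rep_eq[OF assoc_subgroup, of "g \<otimes> c1" "g \<otimes> h \<otimes> c" e] s1 g h c c1 by simp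
    then show ?thesis by (simp add: c2_def)
  qed
  have s3: "s3 = s2 \<otimes> s1"
    using g h c c1 c2 by (simp add: s1_def s2_def s3_def H.m_assoc)
  have p3: "pass e s3 = pass e s2 \<otimes> pass e s1" using s3 s1 s2 by (simp add: pass_mult)
  have IH: "act_H (pass e s2) (fst (act_H (pass e s1) xs t)) (snd (act_H (pass e s1) xs t))
      = act_H (pass e s2 \<otimes> pass e s1) xs t"
    using Cons.IH Cons.prems s1 s2 pass_closed by simp
  have L: "act_H h (a # xs) t = ((c1, e) # fst (act_H (pass e s1) xs t), snd (act_H (pass e s1) xs t))"
    by (simp add: a Let_def c1_def s1_def)
  have R: "act_H (g \<otimes> h) (a # xs) t = ((c2, e) # fst (act_H (pass e s3) xs t), snd (act_H (pass e s3) xs t))"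
    by (simp add: a Let_def c3 s3_def)
  show ?case unfolding L R
    by (simp add: Let_def c2_def[symmetric] s2_def[symmetric] IH p3)
qed

lemma act_H_one: "reduced xs \<Longrightarrow> t \<in> carrier H \<Longrightarrow> act_H \<one> xs t = (xs, t)"
proof (induction xs)
  case Nil
  then show ?case by simp
next
  case (Cons a xs)
  obtain c e where a: "a = (c, e)" by (cases a)
  have c: "c \<in> carrier H" and rc: "rep e c = c" using Cons.prems a by auto
  have "reduced xs" using Cons.prems a by simp
  then show ?case using Cons.IH Cons.prems c rc by (simp add: a Let_def)
qed

lemma normal_form_act_H: "normal_form x \<Longrightarrow> h \<in> carrier H \<Longrightarrow> normal_form (act_H h (fst x) (snd x))"
  using act_H_reduced by (simp add: normal_form_def)

lemma normal_form_act_t: "normal_form x \<Longrightarrow> normal_form (act_t e x)"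
proof -
  assume v: "normal_form x"
  obtain xs t where x: "x = (xs, t)" by (cases x)
  show ?thesis
  proof (cases xs)
    case Nil
    then show ?thesis using v x by (simp add: act_t_def normal_form_def H.lcoset_rep_eq_one_iff[OF assoc_subgroup])
  next
    case (Cons a rest)
    obtain c e' where a: "a = (c, e')" by (cases a)
    show ?thesis
    proof (cases "c = \<one> \<and> e' = (\<not> e)")
      case True
      then show ?thesis using v x Cons a by (simp add: act_t_def normal_form_def)
    next
      case False
      then show ?thesis using v x Cons a
        by (auto simp: act_t_def normal_form_def H.lcoset_rep_eq_one_iff[OF assoc_subgroup])
    qed
  qed
qed

lemma act_t_inv: "normal_form x \<Longrightarrow> act_t e (act_t (\<not> e) x) = x"
proof -
  assume v: "normal_form x"
  obtain xs t where x: "x = (xs, t)" by (cases x)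
  show ?thesis
  proof (cases xs)
    case Nil
    then show ?thesis using x by (simp add: act_t_def)
  next
    case (Cons a rest)
    obtain c e' where a: "a = (c, e')" by (cases a)
    show ?thesis
    proof (cases "c = \<one> \<and> e' = e")
      case True
      have "act_t (\<not> e) x = (rest, t)" using True x Cons a by (simp add: act_t_def)
      moreover have "act_t e (rest, t) = ((\<one>, e) # rest, t)"
      proof (cases rest)
        case Nil
        then show ?thesis by (simp add: act_t_def)
      next
        case (Cons b r)
        obtain c2 e2 where b: "b = (c2, e2)" by (cases b)
        have "c2 = \<one> \<longrightarrow> e2 = e'" using v x \<open>xs = a # rest\<close> a Cons b by (simp add: normal_form_def)
        then show ?thesis using Cons b True by (auto simp: act_t_def)
      qed
      ultimately show ?thesis using True x Cons a by simp
    next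
      case False
      then show ?thesis using x Cons a by (auto simp: act_t_def)
    qed
  qed
qed

lemma act_t_conj:
  assumes v: "normal_form x" and k: "k \<in> K"
  shows "act_t True (act_H k (fst (act_t False x)) (snd (act_t False x))) = act_H (\<phi> k) (fst x) (snd x)"
proof -
  obtain xs t where x: "x = (xs, t)" by (cases x)
  have kc: "k \<in> carrier H" using k K_carr by blast
  have rK: "rep False k = \<one>" using k by (intro rep_eq_one) (simp add: assoc_def)
  have rpK: "rep True (\<phi> k) = \<one>" using k by (intro rep_eq_one) (simp add: assoc_def)
  show ?thesis
  proof (cases "\<exists>rest. xs = (\<one>, True) # rest")
    case True
    then obtain rest where xs: "xs = (\<one>, True) # rest" by blast
    have t_inv_x: "act_t False x = (rest, t)" using x xs by (simp add: act_t_def)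
    have B: "act_H (\<phi> k) xs t = ((\<one>, True) # fst (act_H k rest t), snd (act_H k rest t))"
      using xs rpK kc by (simp add: Let_def pass_def)
    have C: "act_t True (act_H k rest t) = ((\<one>, True) # fst (act_H k rest t), snd (act_H k rest t))"
    proof (cases rest)
      case Nil
      then show ?thesis by (simp add: act_t_def)
    next
      case (Cons b r)
      obtain c2 e2 where b: "b = (c2, e2)" by (cases b)
      have c2: "c2 \<in> carrier H" and rc2: "rep e2 c2 = c2" and p2: "c2 = \<one> \<longrightarrow> e2 = True"
        using v x xs Cons b by (auto simp: normal_form_def)
      have "\<not> (rep e2 (k \<otimes> c2) = \<one> \<and> e2 = False)"
      proof
        assume "rep e2 (k \<otimes> c2) = \<one> \<and> e2 = False"
        then have e2: "e2 = False" and "rep False (k \<otimes> c2) = \<one>" by auto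
        then have "rep False c2 = \<one>" using rep_mult_eq_one_iff[of k False c2] k c2 by (simp add: assoc_def)
        then show False using rc2 p2 e2 by simp
      qed
      then show ?thesis using Cons b by (auto simp: act_t_def Let_def)
    qed
    show ?thesis using t_inv_x B C x by simp
  next
    case False
    note nf = this
    have t_inv_x: "act_t False x = ((\<one>, False) # xs, t)"
    proof (cases xs)
      case Nil
      then show ?thesis using x by (simp add: act_t_def)
    next
      case (Cons b r)
      obtain c2 e2 where b: "b = (c2, e2)" by (cases b)
      have "\<not> (c2 = \<one> \<and> e2 = True)" using nf Cons b by auto
      then show ?thesis using x Cons b by (simp add: act_t_def)
    qed
    have B: "act_H k ((\<one>, False) # xs) t = ((\<one>, False) # fst (act_H (\<phi> k) xs t), snd (act_H (\<phi> k) xs t))"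
      using rK kc by (simp add: Let_def pass_def)
    show ?thesis using t_inv_x B x by (simp add: act_t_def)
  qed
qed

lemma act_word_Nil [simp]: "act_word [] x = x" by (simp add: act_word_def)
lemma act_word_Cons [simp]: "act_word (a # w) x = act_letter a (act_word w x)" by (simp add: act_word_def)
lemma act_word_append: "act_word (u @ v) x = act_word u (act_word v x)" by (simp add: act_word_def)

lemma normal_form_act_letter: "[a] \<in> W \<Longrightarrow> normal_form x \<Longrightarrow> normal_form (act_letter a x)"
  by (cases a) (auto intro: normal_form_act_H normal_form_act_t)

lemma normal_form_act_word: "w \<in> W \<Longrightarrow> normal_form x \<Longrightarrow> normal_form (act_word w x)"
proof (induction w)
  case (Cons a w)
  then have "[a] \<in> W" "w \<in> W" using words_simps(4)[of "[a]" w] by auto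
  then show ?case using Cons by (simp add: normal_form_act_letter)
qed simp

lemma act_word_frame:
  assumes "u @ v \<in> W" "normal_form z" "\<And>z'. normal_form z' \<Longrightarrow> act_word l z' = act_word r z'"
  shows "act_word (u @ l @ v) z = act_word (u @ r @ v) z"
proof -
  have "normal_form (act_word v z)" using assms normal_form_act_word by simp
  then show ?thesis using assms by (simp add: act_word_append)
qed

lemma act_word_relators:
  assumes z: "normal_form z"
  shows "g \<in> carrier H \<Longrightarrow> h \<in> carrier H \<Longrightarrow> act_word [Inl g, Inl h] z = act_word [Inl (g \<otimes> h)] z"
    and "act_word [Inl \<one>] z = z"
    and "act_word [Inr e, Inr (\<not> e)] z = z"
    and "k \<in> K \<Longrightarrow> act_word [Inr True, Inl k, Inr False] z = act_word [Inl (\<phi> k)] z"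
  using z act_H_mult[OF reduced_closed_all] act_H_one act_t_inv[OF z] act_t_conj[OF z]
  by (auto simp: normal_form_def)

lemma act_word_step:
  assumes st: "step x y" and xW: "x \<in> W" and z: "normal_form z"
  shows "act_word x z = act_word y z"
  using st
proof cases
  case (step_mult g h u v)
  have "act_word (u @ [Inl g, Inl h] @ v) z = act_word (u @ [Inl (g \<otimes> h)] @ v) z"
    using step_mult xW act_word_relators(1)[of _ g h] by (intro act_word_frame[OF _ z]) (auto simp del: act_word_Cons)
  with step_mult show ?thesis by simp
next
  case (step_one u v)
  have "act_word (u @ [Inl \<one>] @ v) z = act_word (u @ [] @ v) z"
    using step_one xW by (intro act_word_frame[OF _ z]) (auto simp del: act_word_Cons intro: act_word_relators(2))
  with step_one show ?thesis by simp
next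
  case (t_tinv u v)
  have "act_word (u @ [Inr True, Inr False] @ v) z = act_word (u @ [] @ v) z"
    using t_tinv xW act_word_relators(3)[of _ True] by (intro act_word_frame[OF _ z]) (auto simp del: act_word_Cons)
  with t_tinv show ?thesis by simp
next
  case (tinv_t u v)
  have "act_word (u @ [Inr False, Inr True] @ v) z = act_word (u @ [] @ v) z"
    using tinv_t xW act_word_relators(3)[of _ False] by (intro act_word_frame[OF _ z]) (auto simp del: act_word_Cons)
  with tinv_t show ?thesis by simp
next
  case (step_conj k u v)
  have "act_word (u @ [Inr True, Inl k, Inr False] @ v) z = act_word (u @ [Inl (\<phi> k)] @ v) z"
    using step_conj xW by (intro act_word_frame[OF _ z]) (auto simp del: act_word_Cons intro: act_word_relators(4))
  with step_conj show ?thesis by simp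
qed

lemma act_word_rel: "u \<bowtie> v \<Longrightarrow> normal_form z \<Longrightarrow> act_word u z = act_word v z"
  by (induction rule: rel_induct) (auto intro: act_word_step)

definition nf_one :: "'h nform" where "nf_one = ([], \<one>)"

lemma normal_form_nf_one [simp]: "normal_form nf_one" by (simp add: nf_one_def normal_form_def)

definition nf_word :: "'h nform \<Rightarrow> 'h hnn_word" where
  "nf_word x = concat (map (\<lambda>(c, e). [Inl c, Inr e]) (fst x)) @ [Inl (snd x)]"

lemma nf_word_Cons: "nf_word ((c, e) # xs, t) = [Inl c, Inr e] @ nf_word (xs, t)"
  by (simp add: nf_word_def)

lemma nf_word_Nil: "nf_word ([], t) = [Inl t]"
  by (simp add: nf_word_def)

lemma nf_word_words: "reduced xs \<Longrightarrow> t \<in> carrier H \<Longrightarrow> nf_word (xs, t) \<in> W"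
  by (induction xs) (auto simp: nf_word_Cons nf_word_Nil)

lemma rel_pass: "s \<in> assoc e \<Longrightarrow> [Inl s, Inr e] \<bowtie> [Inr e, Inl (pass e s)]"
proof (cases e)
  case True
  assume s: "s \<in> assoc e"
  then have "phi_inverse s \<in> K" "\<phi> (phi_inverse s) = s" using True phi_inverse_image_K by (auto simp: assoc_def)
  then show ?thesis using rel_stable_swap[of "phi_inverse s"] True by (simp add: pass_def)
next
  case False
  assume s: "s \<in> assoc e"
  then show ?thesis using rel_stable_inv_swap[of s] False by (simp add: pass_def assoc_def)
qed

lemma rel_nf_word_act_H:
  "reduced xs \<Longrightarrow> h \<in> carrier H \<Longrightarrow> t \<in> carrier H \<Longrightarrow> Inl h # nf_word (xs, t) \<bowtie> nf_word (act_H h xs t)"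
proof (induction xs arbitrary: h)
  case Nil
  then show ?case using rel_mult[of h t] by (simp add: nf_word_Nil)
next
  case (Cons a xs)
  obtain c e where a: "a = (c, e)" by (cases a)
  have c: "c \<in> carrier H" and oxs: "reduced xs" using Cons.prems a by auto
  have h: "h \<in> carrier H" and t: "t \<in> carrier H" using Cons.prems by auto
  define c' where "c' = rep e (h \<otimes> c)"
  define s where "s = inv c' \<otimes> (h \<otimes> c)"
  define p where "p = pass e s"
  have c': "c' \<in> carrier H" using h c by (simp add: c'_def rep_closed)
  have s: "s \<in> assoc e" using h c by (simp add: s_def c'_def rep_mem)
  have sc: "s \<in> carrier H" using s assoc_closed by blast
  have p: "p \<in> carrier H" using s by (simp add: p_def pass_closed)
  have hc: "h \<otimes> c = c' \<otimes> s" using h c c' by (simp add: s_def)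
  define rest where "rest = nf_word (xs, t)"
  have rW: "rest \<in> W" using oxs t by (simp add: rest_def nf_word_words)
  have "Inl h # nf_word (a # xs, t) = [Inl h, Inl c] @ (Inr e # rest)"
    by (simp add: a nf_word_Cons rest_def)
  also have "[Inl h, Inl c] @ (Inr e # rest) \<bowtie> [Inl (h \<otimes> c)] @ (Inr e # rest)"
    using rel_mult[OF h c] rW by (intro rel_app_right) auto
  also have "[Inl (h \<otimes> c)] @ (Inr e # rest) = [Inl (c' \<otimes> s)] @ (Inr e # rest)" by (simp add: hc)
  also have "[Inl (c' \<otimes> s)] @ (Inr e # rest) \<bowtie> [Inl c', Inl s] @ (Inr e # rest)"
    using rel_sym[OF rel_mult[OF c' sc]] rW by (intro rel_app_right) auto
  also have "[Inl c', Inl s] @ (Inr e # rest) = [Inl c'] @ [Inl s, Inr e] @ rest" by simp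
  also have "[Inl c'] @ [Inl s, Inr e] @ rest \<bowtie> [Inl c'] @ [Inr e, Inl p] @ rest"
    using rel_pass[OF s] rW c' by (intro rel_app_left rel_app_right) (auto simp: p_def)
  also have "[Inl c'] @ [Inr e, Inl p] @ rest = [Inl c', Inr e] @ (Inl p # rest)" by simp
  also have "[Inl c', Inr e] @ (Inl p # rest) \<bowtie> [Inl c', Inr e] @ nf_word (act_H p xs t)"
    using Cons.IH[OF oxs p t] c' by (intro rel_app_left) (auto simp: rest_def)
  also have "[Inl c', Inr e] @ nf_word (act_H p xs t) = nf_word (act_H h (a # xs) t)"
    by (simp add: a Let_def c'_def[symmetric] s_def[symmetric] p_def[symmetric] nf_word_def)
  finally show ?case .
qed

lemma rel_nf_word_act_t:
  assumes v: "normal_form x" shows "Inr e # nf_word x \<bowtie> nf_word (act_t e x)"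
proof -
  obtain xs t where x: "x = (xs, t)" by (cases x)
  have o: "reduced xs" and t: "t \<in> carrier H" using v x by (auto simp: normal_form_def)
  have wW: "nf_word x \<in> W" using o t x by (simp add: nf_word_words)
  have ins: "Inr e # nf_word x \<bowtie> nf_word ((\<one>, e) # xs, t)"
    using rel_sym[OF rel_one_Cons[of "Inr e # nf_word x"]] wW x by (simp add: nf_word_Cons)
  show ?thesis
  proof (cases xs)
    case Nil
    then show ?thesis using ins x by (simp add: act_t_def)
  next
    case (Cons a rest)
    obtain c e' where a: "a = (c, e')" by (cases a)
    show ?thesis
    proof (cases "c = \<one> \<and> e' = (\<not> e)")
      case True
      have oR: "reduced rest" using o Cons a by simp
      have rW: "nf_word (rest, t) \<in> W" using oR t by (simp add: nf_word_words)
      have "Inr e # nf_word x = [Inr e] @ [Inl \<one>] @ (Inr (\<not> e) # nf_word (rest, t))"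
        using x Cons a True by (simp add: nf_word_Cons)
      also have "[Inr e] @ [Inl \<one>] @ (Inr (\<not> e) # nf_word (rest, t)) \<bowtie> [Inr e] @ [] @ (Inr (\<not> e) # nf_word (rest, t))"
        using rel_one rW by (intro rel_app_left rel_app_right) auto
      also have "[Inr e] @ [] @ (Inr (\<not> e) # nf_word (rest, t)) = [Inr e, Inr (\<not> e)] @ nf_word (rest, t)" by simp
      also have "[Inr e, Inr (\<not> e)] @ nf_word (rest, t) \<bowtie> [] @ nf_word (rest, t)"
        using rel_stable_cancel rW by (intro rel_app_right) auto
      also have "[] @ nf_word (rest, t) = nf_word (act_t e x)"
        using x Cons a True by (simp add: act_t_def)
      finally show ?thesis .
    next
      case False
      then have "act_t e x = ((\<one>, e) # xs, t)" using x Cons a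
        by (cases e; cases e') (auto simp: act_t_def)
      then show ?thesis using ins by simp
    qed
  qed
qed

lemma rel_nf_word: "w \<in> W \<Longrightarrow> w \<bowtie> nf_word (act_word w nf_one)"
proof (induction w)
  case Nil
  then show ?case using rel_sym[OF rel_one] by (simp add: nf_one_def nf_word_Nil)
next
  case (Cons a w)
  have aW: "[a] \<in> W" and wW: "w \<in> W" using Cons.prems words_simps(4)[of "[a]" w] by auto
  define y where "y = act_word w nf_one"
  have vy: "normal_form y" using wW by (simp add: y_def normal_form_act_word)
  have "a # w \<bowtie> [a] @ nf_word y" using Cons.IH[OF wW] aW by (simp add: y_def rel_app_left[of _ _ "[a]", simplified])
  also have "[a] @ nf_word y \<bowtie> nf_word (act_word (a # w) nf_one)"
  proof (cases a)
    case (Inl h)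
    then have "h \<in> carrier H" using aW by simp
    then show ?thesis using rel_nf_word_act_H[of "fst y" h "snd y"] vy Inl by (simp add: y_def normal_form_def)
  next
    case (Inr e)
    then show ?thesis using rel_nf_word_act_t[OF vy, of e] by (simp add: y_def)
  qed
  finally show ?case .
qed

lemma act_H_mult_right:
  "\<forall>p\<in>set xs. fst p \<in> carrier H \<Longrightarrow> h \<in> carrier H \<Longrightarrow> t \<in> carrier H \<Longrightarrow> g \<in> carrier H \<Longrightarrow>
   act_H h xs (t \<otimes> g) = (fst (act_H h xs t), snd (act_H h xs t) \<otimes> g)"
proof (induction xs arbitrary: h)
  case Nil
  then show ?case by (simp add: H.m_assoc)
next
  case (Cons a xs)
  obtain c e where a: "a = (c, e)" by (cases a)
  have c: "c \<in> carrier H" using Cons.prems a by simp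
  have "pass e (inv (rep e (h \<otimes> c)) \<otimes> (h \<otimes> c)) \<in> carrier H"
    using Cons.prems c by (simp add: rep_mem pass_closed)
  then show ?case using Cons by (simp add: a Let_def)
qed

lemma act_letter_mult_right: "[a] \<in> W \<Longrightarrow> normal_form y \<Longrightarrow> g \<in> carrier H \<Longrightarrow>
   act_letter a (fst y, snd y \<otimes> g) = (fst (act_letter a y), snd (act_letter a y) \<otimes> g)"
proof (cases a)
  case (Inl h)
  assume "[a] \<in> W" "normal_form y" "g \<in> carrier H"
  then show ?thesis using Inl act_H_mult_right[OF reduced_closed_all] by (simp add: normal_form_def)
next
  case (Inr e)
  then show ?thesis by (auto simp: act_t_def split: list.splits)
qed

lemma act_word_mult_right: "w \<in> W \<Longrightarrow> normal_form x \<Longrightarrow> g \<in> carrier H \<Longrightarrow>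
   act_word w (fst x, snd x \<otimes> g) = (fst (act_word w x), snd (act_word w x) \<otimes> g)"
proof (induction w)
  case Nil
  then show ?case by simp
next
  case (Cons a w)
  have aW: "[a] \<in> W" and wW: "w \<in> W" using Cons.prems words_simps(4)[of "[a]" w] by auto
  have v: "normal_form (act_word w x)" using wW Cons.prems by (simp add: normal_form_act_word)
  show ?case using Cons.IH[OF wW Cons.prems(2,3)] act_letter_mult_right[OF aW v Cons.prems(3)] by simp
qed

lemma act_word_cls_eq: "u \<in> W \<Longrightarrow> v \<in> W \<Longrightarrow> cls u = cls v \<Longrightarrow> act_word u nf_one = act_word v nf_one"
  using cls_eq_iff act_word_rel normal_form_nf_one by blast

section \<open>Consequences of the normal form\<close>

lemma emb_inj: "g \<in> carrier H \<Longrightarrow> h \<in> carrier H \<Longrightarrow> emb g = emb h \<Longrightarrow> g = h"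
proof -
  assume g: "g \<in> carrier H" and h: "h \<in> carrier H" and e: "emb g = emb h"
  have "act_word [Inl g] nf_one = act_word [Inl h] nf_one" using act_word_cls_eq[of "[Inl g]" "[Inl h]"] g h e by simp
  then show ?thesis using g h by (simp add: nf_one_def)
qed

lemma stable_conj_emb_imp_K:
  assumes x: "x \<in> carrier H" and y: "y \<in> carrier H"
    and e: "stable \<otimes>\<^bsub>G\<^esub> emb x \<otimes>\<^bsub>G\<^esub> stable_inv = emb y"
  shows "x \<in> K"
proof -
  have "cls [Inr True, Inl x, Inr False] = emb y" using e x by (simp add: mult_cls)
  then have "act_word [Inr True, Inl x, Inr False] nf_one = act_word [Inl y] nf_one"
    using act_word_cls_eq[of "[Inr True, Inl x, Inr False]" "[Inl y]"] x y by simp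
  moreover have "fst (act_word [Inr True, Inl x, Inr False] nf_one) =
      (if rep False x = \<one> then [] else [(\<one>, True), (rep False x, False)])"
    using x by (simp add: nf_one_def act_t_def Let_def)
  moreover have "fst (act_word [Inl y] nf_one) = []" by (simp add: nf_one_def)
  ultimately have "rep False x = \<one>" by (metis list.distinct(1))
  then have "x \<in> assoc False" using H.lcoset_rep_eq_one_iff[OF assoc_subgroup x] by simp
  then show ?thesis by (simp add: assoc_def)
qed

lemma carrier_not_subset_assoc: "K \<noteq> carrier H \<Longrightarrow> \<not> carrier H \<subseteq> assoc e"
proof
  assume ne: "K \<noteq> carrier H" and sub: "carrier H \<subseteq> assoc e"
  have "carrier H \<subseteq> K"
  proof (cases e)
    case True
    show ?thesis
    proof
      fix h assume h: "h \<in> carrier H"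
      then have "\<phi> h \<in> \<phi> ` K" using sub True by (auto simp: assoc_def)
      then obtain k where k: "k \<in> K" "\<phi> h = \<phi> k" by auto
      then have "h = k" using h K_carr phi_inj by (auto dest: inj_onD)
      then show "h \<in> K" using k by simp
    qed
  next
    case False
    then show ?thesis using sub by (simp add: assoc_def)
  qed
  then show False using ne K_sub by blast
qed

text \<open>If every \<open>h \<in> H\<close> fixes the first syllable \<open>c\<close>, then \<open>h c \<in> c (assoc e)\<close> for all \<open>h\<close>,
  so the conjugate \<open>c\<inverse> H c = H\<close> lies in \<open>assoc e\<close>; this contradicts the properness of \<open>K\<close>.\<close>

lemma act_H_fixed_imp_Nil:
  assumes ne: "K \<noteq> carrier H" and red: "reduced xs"
    and fixed: "\<And>h. h \<in> carrier H \<Longrightarrow> fst (act_H h xs t) = xs"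
  shows "xs = []"
proof (rule ccontr)
  assume "xs \<noteq> []"
  then obtain c e r where xs: "xs = (c, e) # r" by (cases xs) auto
  have c: "c \<in> carrier H" and rc: "rep e c = c" using red xs by auto
  have fix_c: "rep e (h \<otimes> c) = c" if h: "h \<in> carrier H" for h
    using fixed[OF h] xs by (simp add: Let_def)
  have "carrier H \<subseteq> assoc e"
  proof
    fix h assume h: "h \<in> carrier H"
    define h' where "h' = c \<otimes> h \<otimes> inv c"
    have h': "h' \<in> carrier H" using h c by (simp add: h'_def)
    have "rep e c = rep e (h' \<otimes> c)" using fix_c[OF h'] rc by simp
    then have "inv c \<otimes> (h' \<otimes> c) \<in> assoc e" using H.lcoset_rep_eqD[OF assoc_subgroup c] h' c by simp
    then show "h \<in> assoc e" using h c by (simp add: h'_def H.m_assoc)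
  qed
  then show False using carrier_not_subset_assoc[OF ne] by blast
qed

lemma commutes_with_H_imp_emb:
  assumes ne: "K \<noteq> carrier H" and z: "z \<in> carrier G"
    and comm: "\<And>h. h \<in> carrier H \<Longrightarrow> z \<otimes>\<^bsub>G\<^esub> emb h = emb h \<otimes>\<^bsub>G\<^esub> z"
  shows "\<exists>c\<in>carrier H. z = emb c"
proof -
  obtain w where w: "w \<in> W" and zw: "z = cls w" using z by (auto simp: carrier_G)
  obtain xs t where nf: "act_word w nf_one = (xs, t)" by (cases "act_word w nf_one")
  have red: "reduced xs" and t: "t \<in> carrier H"
    using normal_form_act_word[OF w normal_form_nf_one] nf by (auto simp: normal_form_def)
  have fixed: "act_H h xs t = (xs, t \<otimes> h)" if h: "h \<in> carrier H" for h
  proof -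
    have "cls (Inl h # w) = cls (w @ [Inl h])" using comm[OF h] zw w h by (simp add: mult_cls)
    then have "act_word (Inl h # w) nf_one = act_word (w @ [Inl h]) nf_one"
      using w h by (intro act_word_cls_eq) auto
    also have "\<dots> = act_word w (fst nf_one, snd nf_one \<otimes> h)"
      using h by (simp add: act_word_append nf_one_def)
    also have "\<dots> = (xs, t \<otimes> h)" using act_word_mult_right[OF w normal_form_nf_one h] nf by simp
    finally show ?thesis using nf by simp
  qed
  have "xs = []" using act_H_fixed_imp_Nil[OF ne red, of t] fixed by simp
  then have "w \<bowtie> [Inl t]" using rel_nf_word[OF w] nf by (simp add: nf_word_Nil)
  then have "z = emb t" using zw by (simp add: cls_eq)
  then show ?thesis using t by blast
qed

section \<open>The automorphisms \<open>\<alpha>\<^sub>(\<delta>,a)\<close>\<close>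

text \<open>Only these properties of \<open>(\<delta>, a)\<close> are needed for \<open>\<alpha>\<^sub>(\<delta>,a)\<close> to respect the defining
  relations; \<open>\<delta>\<close> need not be bijective.\<close>

definition compatible :: "('h \<Rightarrow> 'h) \<Rightarrow> 'h \<Rightarrow> bool" where
  "compatible \<delta> a \<longleftrightarrow> (\<forall>h\<in>carrier H. \<delta> h \<in> carrier H) \<and>
     (\<forall>g\<in>carrier H. \<forall>h\<in>carrier H. \<delta> (g \<otimes> h) = \<delta> g \<otimes> \<delta> h) \<and> \<delta> \<one> = \<one> \<and>
     (\<forall>k\<in>K. \<delta> k \<in> K) \<and> a \<in> carrier H \<and> (\<forall>k\<in>K. \<phi> (\<delta> k) = inv a \<otimes> \<delta> (\<phi> k) \<otimes> a)"

definition subst :: "('h \<Rightarrow> 'h) \<Rightarrow> 'h \<Rightarrow> 'h hnn_word \<Rightarrow> 'h hnn_word" where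
  "subst \<delta> a w = concat (map (hnn_letter_map H \<delta> a) w)"

lemma subst_Nil [simp]: "subst \<delta> a [] = []" by (simp add: subst_def)
lemma subst_Cons: "subst \<delta> a (l # w) = subst \<delta> a [l] @ subst \<delta> a w" by (simp add: subst_def)
lemma subst_append: "subst \<delta> a (u @ v) = subst \<delta> a u @ subst \<delta> a v" by (simp add: subst_def)
lemma subst_Inl [simp]: "subst \<delta> a [Inl h] = [Inl (\<delta> h)]" by (simp add: subst_def hnn_letter_map_def)
lemma subst_stable [simp]: "subst \<delta> a [Inr True] = [Inl a, Inr True]" by (simp add: subst_def hnn_letter_map_def)
lemma subst_stable_inv [simp]: "subst \<delta> a [Inr False] = [Inr False, Inl (inv a)]" by (simp add: subst_def hnn_letter_map_def)

lemma compatibleD: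
  assumes "compatible \<delta> a"
  shows "\<And>h. h \<in> carrier H \<Longrightarrow> \<delta> h \<in> carrier H"
    "\<And>g h. g \<in> carrier H \<Longrightarrow> h \<in> carrier H \<Longrightarrow> \<delta> (g \<otimes> h) = \<delta> g \<otimes> \<delta> h"
    "\<delta> \<one> = \<one>" "\<And>k. k \<in> K \<Longrightarrow> \<delta> k \<in> K" "a \<in> carrier H"
    "\<And>k. k \<in> K \<Longrightarrow> \<phi> (\<delta> k) = inv a \<otimes> \<delta> (\<phi> k) \<otimes> a"
  using assms by (auto simp: compatible_def)

lemma compatible_inv: "compatible \<delta> a \<Longrightarrow> h \<in> carrier H \<Longrightarrow> \<delta> (inv h) = inv (\<delta> h)"
proof -
  assume o: "compatible \<delta> a" and h: "h \<in> carrier H"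
  have "\<delta> (inv h) \<otimes> \<delta> h = \<one>" using compatibleD(2)[OF o, of "inv h" h] compatibleD(3)[OF o] h by simp
  then show ?thesis using compatibleD(1)[OF o] h by (simp add: H.inv_equality)
qed

lemma subst_words: "compatible \<delta> a \<Longrightarrow> w \<in> W \<Longrightarrow> subst \<delta> a w \<in> W"
proof (induction w)
  case (Cons l w)
  then have lw: "[l] \<in> W" "w \<in> W" using words_simps(4)[of "[l]" w] by auto
  have "subst \<delta> a [l] \<in> W"
    using lw compatibleD[OF Cons.prems(1)] by (cases l) (auto simp: subst_def hnn_letter_map_def split: bool.split)
  then show ?case using Cons lw by (subst subst_Cons) simp
qed simp

lemma rel_frame: "l \<bowtie> r \<Longrightarrow> u \<in> W \<Longrightarrow> v \<in> W \<Longrightarrow> u @ l @ v \<bowtie> u @ r @ v"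
  by (intro rel_app_left rel_app_right) (auto dest: rel_W)

lemma subst_frame: "compatible \<delta> a \<Longrightarrow> u \<in> W \<Longrightarrow> v \<in> W \<Longrightarrow> subst \<delta> a l \<bowtie> subst \<delta> a r \<Longrightarrow>
   subst \<delta> a (u @ l @ v) \<bowtie> subst \<delta> a (u @ r @ v)"
  unfolding subst_append by (rule rel_frame) (auto simp: subst_words)

lemma subst_stable_cancel:
  assumes o: "compatible \<delta> a"
  shows "subst \<delta> a [Inr e, Inr (\<not> e)] \<bowtie> []"
proof -
  have a: "a \<in> carrier H" using compatibleD[OF o] by simp
  have "[Inl a] @ [Inr True, Inr False] @ [Inl (inv a)] \<bowtie> [Inl a] @ [] @ [Inl (inv a)]"
    using rel_stable_cancel[of True] a by (intro rel_frame) auto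
  also have "[Inl a] @ [] @ [Inl (inv a)] \<bowtie> [Inl \<one>]" using rel_mult[of a "inv a"] a by simp
  also have "[Inl \<one>] \<bowtie> []" by (rule rel_one)
  finally have t: "subst \<delta> a [Inr True, Inr False] \<bowtie> []" by (simp add: subst_def hnn_letter_map_def)
  have "[Inr False] @ [Inl (inv a), Inl a] @ [Inr True] \<bowtie> [Inr False] @ [Inl \<one>] @ [Inr True]"
    using rel_mult[of "inv a" a] a by (intro rel_frame) auto
  also have "[Inr False] @ [Inl \<one>] @ [Inr True] \<bowtie> [Inr False] @ [] @ [Inr True]"
    using rel_one by (intro rel_frame) auto
  also have "[Inr False] @ [] @ [Inr True] \<bowtie> []" using rel_stable_cancel[of False] by simp
  finally have "subst \<delta> a [Inr False, Inr True] \<bowtie> []" by (simp add: subst_def hnn_letter_map_def)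
  with t show ?thesis by (cases e) simp_all
qed

lemma subst_stable_conj:
  assumes o: "compatible \<delta> a" and k: "k \<in> K"
  shows "subst \<delta> a [Inr True, Inl k, Inr False] \<bowtie> subst \<delta> a [Inl (\<phi> k)]"
proof -
  have a: "a \<in> carrier H" using compatibleD[OF o] by simp
  have dk: "\<delta> k \<in> K" using compatibleD(4)[OF o k] .
  have dkc: "\<delta> k \<in> carrier H" using dk K_carr by blast
  have dpk: "\<delta> (\<phi> k) \<in> carrier H" using compatibleD(1)[OF o] k by simp
  have "[Inl a] @ [Inr True, Inl (\<delta> k), Inr False] @ [Inl (inv a)] \<bowtie> [Inl a] @ [Inl (\<phi> (\<delta> k))] @ [Inl (inv a)]"
    using step_rel[OF hnn_step.step_conj[OF dk, of H \<phi> "[]" "[]"]] dkc a by (intro rel_frame) auto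
  also have "[Inl a] @ [Inl (\<phi> (\<delta> k))] @ [Inl (inv a)] \<bowtie> [Inl (a \<otimes> \<phi> (\<delta> k))] @ [Inl (inv a)]"
    using rel_app_right[OF rel_mult[of a "\<phi> (\<delta> k)"], of "[Inl (inv a)]"] a dkc by simp
  also have "[Inl (a \<otimes> \<phi> (\<delta> k))] @ [Inl (inv a)] \<bowtie> [Inl (a \<otimes> \<phi> (\<delta> k) \<otimes> inv a)]"
    using rel_mult[of "a \<otimes> \<phi> (\<delta> k)" "inv a"] a dkc by simp
  also have "a \<otimes> \<phi> (\<delta> k) \<otimes> inv a = \<delta> (\<phi> k)"
    using compatibleD(6)[OF o k] a dpk by (simp add: H.m_assoc)
  finally show ?thesis by (simp add: subst_def hnn_letter_map_def)
qed

lemma subst_step: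
  assumes o: "compatible \<delta> a" and st: "step x y" and xW: "x \<in> W"
  shows "subst \<delta> a x \<bowtie> subst \<delta> a y"
  using st
proof cases
  case (step_mult g h u v)
  have "subst \<delta> a [Inl g, Inl h] \<bowtie> subst \<delta> a [Inl (g \<otimes> h)]"
    using rel_mult[of "\<delta> g" "\<delta> h"] compatibleD[OF o] step_mult by (simp add: subst_def hnn_letter_map_def)
  then show ?thesis unfolding step_mult(1,2) by (rule subst_frame[OF o, rotated 2]) (use step_mult xW in simp)+
next
  case (step_one u v)
  have "subst \<delta> a [Inl \<one>] \<bowtie> subst \<delta> a []" using rel_one compatibleD[OF o] by simp
  then show ?thesis using subst_frame[OF o, of u v "[Inl \<one>]" "[]"] step_one xW by simp
next
  case (t_tinv u v)
  then show ?thesis using subst_frame[OF o, of u v "[Inr True, Inr False]" "[]"] subst_stable_cancel[OF o, of True] xW by simp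
next
  case (tinv_t u v)
  then show ?thesis using subst_frame[OF o, of u v "[Inr False, Inr True]" "[]"] subst_stable_cancel[OF o, of False] xW by simp
next
  case (step_conj k u v)
  then show ?thesis
    using xW subst_frame[OF o, of u v "[Inr True, Inl k, Inr False]" "[Inl (\<phi> k)]"] subst_stable_conj[OF o]
    by simp
qed

lemma subst_rel:
  assumes o: "compatible \<delta> a" and uv: "u \<bowtie> v"
  shows "subst \<delta> a u \<bowtie> subst \<delta> a v"
  using uv by (induction rule: rel_induct) (auto intro: subst_step[OF o] rel_refl subst_words[OF o] rel_sym rel_trans)

abbreviation alpha where "alpha \<delta> a \<equiv> hnn_alpha H K \<phi> \<delta> a"

lemma alpha_cls: "compatible \<delta> a \<Longrightarrow> w \<in> W \<Longrightarrow> alpha \<delta> a (cls w) = cls (subst \<delta> a w)"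
proof -
  assume o: "compatible \<delta> a" and w: "w \<in> W"
  have "subst \<delta> a (SOME u. u \<in> cls w) \<bowtie> subst \<delta> a w"
    using subst_rel[OF o rel_sym[OF some_cls[OF w]]] .
  then have "cls (subst \<delta> a (SOME u. u \<in> cls w)) = cls (subst \<delta> a w)" by (rule cls_eq)
  then show ?thesis using w by (simp add: hnn_alpha_def subst_def)
qed

lemma alpha_ext: "alpha \<delta> a \<in> extensional (carrier G)"
  by (simp add: hnn_alpha_def)

lemma alpha_hom: "compatible \<delta> a \<Longrightarrow> alpha \<delta> a \<in> hom G G"
proof -
  assume o: "compatible \<delta> a"
  show ?thesis
  proof (rule homI)
    fix x assume "x \<in> carrier G"
    then obtain w where "w \<in> W" "x = cls w" by (auto simp: carrier_G)
    then show "alpha \<delta> a x \<in> carrier G" using o subst_words alpha_cls by simp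
  next
    fix x y assume "x \<in> carrier G" "y \<in> carrier G"
    then obtain u v where uv: "u \<in> W" "v \<in> W" "x = cls u" "y = cls v" by (auto simp: carrier_G)
    then show "alpha \<delta> a (x \<otimes>\<^bsub>G\<^esub> y) = alpha \<delta> a x \<otimes>\<^bsub>G\<^esub> alpha \<delta> a y"
      using o subst_words alpha_cls by (simp add: mult_cls subst_append)
  qed
qed

lemma subst_subst_letter:
  assumes o1: "compatible \<delta>1 a1" and o2: "compatible \<delta>2 a2"
    and d3: "\<And>h. h \<in> carrier H \<Longrightarrow> \<delta>3 h = \<delta>2 (\<delta>1 h)" and a3: "a3 = \<delta>2 a1 \<otimes> a2"
    and l: "[l] \<in> W"
  shows "subst \<delta>2 a2 (subst \<delta>1 a1 [l]) \<bowtie> subst \<delta>3 a3 [l]"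
proof (cases l)
  case (Inl h)
  then have h: "h \<in> carrier H" using l by simp
  have "[Inl (\<delta>2 (\<delta>1 h))] \<in> W" using h compatibleD(1)[OF o1] compatibleD(1)[OF o2] by simp
  then show ?thesis using Inl d3[OF h] by (simp add: rel_refl)
next
  case (Inr b)
  have a1: "a1 \<in> carrier H" and a2: "a2 \<in> carrier H" using compatibleD(5)[OF o1] compatibleD(5)[OF o2] .
  have da1: "\<delta>2 a1 \<in> carrier H" using compatibleD(1)[OF o2 a1] .
  show ?thesis
  proof (cases b)
    case True
    have "subst \<delta>2 a2 (subst \<delta>1 a1 [l]) = [Inl (\<delta>2 a1), Inl a2] @ [Inr True]"
      using Inr True by (simp add: subst_def hnn_letter_map_def)
    also have "[Inl (\<delta>2 a1), Inl a2] @ [Inr True] \<bowtie> [Inl (\<delta>2 a1 \<otimes> a2)] @ [Inr True]"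
      using rel_mult[OF da1 a2] by (intro rel_app_right) auto
    also have "[Inl (\<delta>2 a1 \<otimes> a2)] @ [Inr True] = subst \<delta>3 a3 [l]" using Inr True a3 by simp
    finally show ?thesis .
  next
    case False
    have ia: "\<delta>2 (inv a1) = inv (\<delta>2 a1)" using compatible_inv[OF o2 a1] .
    have "subst \<delta>2 a2 (subst \<delta>1 a1 [l]) = [Inr False] @ [Inl (inv a2), Inl (inv (\<delta>2 a1))]"
      using Inr False ia by (simp add: subst_def hnn_letter_map_def)
    also have "[Inr False] @ [Inl (inv a2), Inl (inv (\<delta>2 a1))] \<bowtie> [Inr False] @ [Inl (inv a2 \<otimes> inv (\<delta>2 a1))]"
      using rel_mult[of "inv a2" "inv (\<delta>2 a1)"] da1 a2 by (intro rel_app_left) auto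
    also have "[Inr False] @ [Inl (inv a2 \<otimes> inv (\<delta>2 a1))] = subst \<delta>3 a3 [l]"
      using Inr False a3 da1 a2 by (simp add: H.inv_mult_group)
    finally show ?thesis .
  qed
qed

lemma alpha_comp:
  assumes o1: "compatible \<delta>1 a1" and o2: "compatible \<delta>2 a2" and o3: "compatible \<delta>3 a3"
    and d3: "\<And>h. h \<in> carrier H \<Longrightarrow> \<delta>3 h = \<delta>2 (\<delta>1 h)" and a3: "a3 = \<delta>2 a1 \<otimes> a2"
    and C: "C \<in> carrier G"
  shows "alpha \<delta>2 a2 (alpha \<delta>1 a1 C) = alpha \<delta>3 a3 C"
proof -
  let ?f = "alpha \<delta>2 a2 \<circ> alpha \<delta>1 a1"
  have "?f C = alpha \<delta>3 a3 C"
  proof (rule hom_eq_on_letters[OF Gp.is_group _ alpha_hom[OF o3] _ C])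
    show "?f \<in> hom G G" using alpha_hom[OF o1] alpha_hom[OF o2] by (rule hom_compose)
    fix l assume l: "[l] \<in> W"
    have "?f (cls [l]) = cls (subst \<delta>2 a2 (subst \<delta>1 a1 [l]))"
      using l o1 o2 subst_words by (simp add: alpha_cls)
    also have "\<dots> = cls (subst \<delta>3 a3 [l])" using subst_subst_letter[OF o1 o2 d3 a3 l] by (rule cls_eq)
    also have "\<dots> = alpha \<delta>3 a3 (cls [l])" using l o3 by (simp add: alpha_cls)
    finally show "?f (cls [l]) = alpha \<delta>3 a3 (cls [l])" .
  qed
  then show ?thesis by simp
qed

lemma subst_one_letter:
  assumes d: "\<And>h. h \<in> carrier H \<Longrightarrow> \<delta> h = h" and l: "[l] \<in> W"
  shows "subst \<delta> \<one> [l] \<bowtie> [l]"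
proof (cases l)
  case (Inl h)
  then show ?thesis using l d by (simp add: rel_refl)
next
  case (Inr b)
  then show ?thesis
  proof (cases b)
    case True
    then show ?thesis using Inr rel_one_Cons[of "[Inr True]"] by simp
  next
    case False
    have "[Inr False] @ [Inl \<one>] @ [] \<bowtie> [Inr False] @ [] @ []" using rel_one by (intro rel_frame) auto
    then show ?thesis using Inr False by simp
  qed
qed

lemma alpha_id:
  assumes o: "compatible \<delta> \<one>" and d: "\<And>h. h \<in> carrier H \<Longrightarrow> \<delta> h = h" and C: "C \<in> carrier G"
  shows "alpha \<delta> \<one> C = C"
proof (rule hom_eq_on_letters[OF Gp.is_group alpha_hom[OF o] _ _ C])
  show "(\<lambda>x. x) \<in> hom G G" by (rule homI) auto
  fix l assume "[l] \<in> W"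
  then show "alpha \<delta> \<one> (cls [l]) = cls [l]"
    using o cls_eq[OF subst_one_letter[OF d]] by (simp add: alpha_cls)
qed

lemma alpha_eq_inn_aut:
  assumes o: "compatible \<delta> a" and g: "g \<in> carrier G"
    and letters: "\<And>l. [l] \<in> W \<Longrightarrow> cls (subst \<delta> a [l]) = inv\<^bsub>G\<^esub> g \<otimes>\<^bsub>G\<^esub> cls [l] \<otimes>\<^bsub>G\<^esub> g"
    and C: "C \<in> carrier G"
  shows "alpha \<delta> a C = inn_aut G g C"
proof (rule hom_eq_on_letters[OF Gp.is_group alpha_hom[OF o] _ _ C])
  show "inn_aut G g \<in> hom G G" using Gp.inn_aut_iso[OF g] by (rule iso_imp_homomorphism)
  fix l assume "[l] \<in> W"
  then show "alpha \<delta> a (cls [l]) = inn_aut G g (cls [l])"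
    using o letters by (simp add: alpha_cls inn_aut_def)
qed

section \<open>The map \<open>\<chi>\<^sub>2\<close>\<close>

abbreviation twist where "twist b \<equiv> inv b \<otimes> \<phi> b"
abbreviation chi_aut where "chi_aut b \<equiv> alpha (conjg H b) (twist b)"

lemma normalizer_subgroup: "subgroup (normalizer H K) H"
  using H.normalizer_imp_subgroup[OF K_sub] .

lemma normalizer_closed: "b \<in> normalizer H K \<Longrightarrow> b \<in> carrier H"
  using subgroup.mem_carrier[OF normalizer_subgroup] .

lemma normalizer_mult: "b \<in> normalizer H K \<Longrightarrow> b' \<in> normalizer H K \<Longrightarrow> b \<otimes> b' \<in> normalizer H K"
  using subgroup.m_closed[OF normalizer_subgroup] .

lemma normalizer_inv: "b \<in> normalizer H K \<Longrightarrow> inv b \<in> normalizer H K"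
  using subgroup.m_inv_closed[OF normalizer_subgroup] .

lemma normalizer_one: "\<one> \<in> normalizer H K"
  using subgroup.one_closed[OF normalizer_subgroup] .

lemma compatible_conjg:
  assumes bN: "b \<in> normalizer H K"
  shows "compatible (conjg H b) (twist b)"
proof -
  have bc: "b \<in> carrier H" using normalizer_closed[OF bN] .
  have bK: "inv b \<otimes> k \<otimes> b \<in> K" if "k \<in> K" for k
    using H.normalizer_memD[OF K_sub bN that] .
  have "\<phi> (inv b \<otimes> k \<otimes> b) = inv (twist b) \<otimes> (inv b \<otimes> \<phi> k \<otimes> b) \<otimes> twist b" if k: "k \<in> K" for k
    using bc K_carr[OF k] by (simp add: phi_inv H.m_assoc H.inv_mult_group)
  then show ?thesis unfolding compatible_def conjg_def
    using bc bK by (auto simp: H.m_assoc)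
qed

lemma chi_aut_comp:
  assumes b: "b \<in> normalizer H K" and b': "b' \<in> normalizer H K" and C: "C \<in> carrier G"
  shows "chi_aut b' (chi_aut b C) = chi_aut (b \<otimes> b') C"
proof (rule alpha_comp[OF compatible_conjg[OF b] compatible_conjg[OF b'] compatible_conjg[OF normalizer_mult[OF b b']] _ _ C])
  have bc: "b \<in> carrier H" "b' \<in> carrier H" using normalizer_closed b b' by auto
  fix h assume h: "h \<in> carrier H"
  show "conjg H (b \<otimes> b') h = conjg H b' (conjg H b h)"
    using bc h by (simp add: conjg_def H.m_assoc H.inv_mult_group)
next
  have bc: "b \<in> carrier H" "b' \<in> carrier H" using normalizer_closed b b' by auto
  show "twist (b \<otimes> b') = conjg H b' (twist b) \<otimes> twist b'"
    using bc by (simp add: conjg_def H.m_assoc H.inv_mult_group)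
qed

lemma chi_aut_one: "C \<in> carrier G \<Longrightarrow> chi_aut \<one> C = C"
  using alpha_id[of "conjg H \<one>" C] compatible_conjg[OF normalizer_one] by (simp add: conjg_def)

lemma chi_aut_iso: "b \<in> normalizer H K \<Longrightarrow> chi_aut b \<in> iso G G"
proof -
  assume b: "b \<in> normalizer H K"
  have bc: "b \<in> carrier H" using normalizer_closed[OF b] .
  have ib: "inv b \<in> normalizer H K" using normalizer_inv[OF b] .
  have "group_isomorphisms G G (chi_aut b) (chi_aut (inv b))"
    unfolding group_isomorphisms_def
  proof (intro conjI ballI)
    show "chi_aut b \<in> hom G G" using alpha_hom[OF compatible_conjg[OF b]] .
    show "chi_aut (inv b) \<in> hom G G" using alpha_hom[OF compatible_conjg[OF ib]] .
    fix x assume x: "x \<in> carrier G"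
    show "chi_aut (inv b) (chi_aut b x) = x" using chi_aut_comp[OF b ib x] chi_aut_one[OF x] bc by simp
  next
    fix y assume y: "y \<in> carrier G"
    show "chi_aut b (chi_aut (inv b) y) = y" using chi_aut_comp[OF ib b y] chi_aut_one[OF y] bc by simp
  qed
  then show ?thesis by (rule group_isomorphisms_imp_iso)
qed

lemma chi_aut_Aut: "b \<in> normalizer H K \<Longrightarrow> chi_aut b \<in> carrier (Aut G)"
  using chi_aut_iso alpha_ext by (simp add: Aut_carrier_iff)

lemma chi_aut_mult: "b \<in> normalizer H K \<Longrightarrow> b' \<in> normalizer H K \<Longrightarrow> chi_aut b \<otimes>\<^bsub>Aut G\<^esub> chi_aut b' = chi_aut (b \<otimes> b')"
proof -
  assume b: "b \<in> normalizer H K" and b': "b' \<in> normalizer H K"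
  show ?thesis
  proof
    fix C
    show "(chi_aut b \<otimes>\<^bsub>Aut G\<^esub> chi_aut b') C = chi_aut (b \<otimes> b') C"
    proof (cases "C \<in> carrier G")
      case True
      then show ?thesis using chi_aut_comp[OF b b' True] by (simp add: Aut_mult)
    next
      case False
      then show ?thesis using alpha_ext[of "conjg H (b \<otimes> b')" "twist (b \<otimes> b')"]
        by (simp add: Aut_mult extensional_def)
    qed
  qed
qed

lemma chi2_eq: "chi2 H K \<phi> b = Inn G #>\<^bsub>Aut G\<^esub> chi_aut b"
  by (simp add: chi2_def)

lemma chi2_OutV: "b \<in> normalizer H K \<Longrightarrow> chi2 H K \<phi> b \<in> OutV H K \<phi>"
proof -
  assume b: "b \<in> normalizer H K"
  have bc: "b \<in> carrier H" using normalizer_closed[OF b] .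
  have "b \<otimes> twist b \<otimes> inv (\<phi> b) = \<one>" using bc by (simp add: H.m_assoc)
  moreover have "\<one> \<in> centralizer H (\<phi> ` K)"
    using K_carr by (auto simp: centralizer_def)
  ultimately show ?thesis using b bc unfolding OutV_def chi2_eq
    by (intro CollectI exI[of _ b] exI[of _ "twist b"]) simp
qed

lemma chi2_hom: "chi2 H K \<phi> \<in> hom (H\<lparr>carrier := normalizer H K\<rparr>) (Out G)"
proof -
  interpret AG: group "Aut G" by (rule Aut_group) (rule group_G)
  interpret NI: normal "Inn G" "Aut G" by (rule Gp.Inn_normal)
  show ?thesis
  proof (rule homI)
    fix b assume "b \<in> carrier (H\<lparr>carrier := normalizer H K\<rparr>)"
    then have b: "b \<in> normalizer H K" by simp
    show "chi2 H K \<phi> b \<in> carrier (Out G)"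
      using chi_aut_Aut[OF b] by (auto simp: Out_def carrier_FactGroup chi2_eq)
  next
    fix b b' assume "b \<in> carrier (H\<lparr>carrier := normalizer H K\<rparr>)" "b' \<in> carrier (H\<lparr>carrier := normalizer H K\<rparr>)"
    then have b: "b \<in> normalizer H K" and b': "b' \<in> normalizer H K" by auto
    have "chi2 H K \<phi> (b \<otimes> b') = Inn G #>\<^bsub>Aut G\<^esub> (chi_aut b \<otimes>\<^bsub>Aut G\<^esub> chi_aut b')"
      by (simp add: chi2_eq chi_aut_mult[OF b b'])
    also have "\<dots> = (Inn G #>\<^bsub>Aut G\<^esub> chi_aut b) <#>\<^bsub>Aut G\<^esub> (Inn G #>\<^bsub>Aut G\<^esub> chi_aut b')"
      using NI.rcos_sum[OF chi_aut_Aut[OF b] chi_aut_Aut[OF b']] by simp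
    finally show "chi2 H K \<phi> (b \<otimes>\<^bsub>H\<lparr>carrier := normalizer H K\<rparr>\<^esub> b') =
        chi2 H K \<phi> b \<otimes>\<^bsub>Out G\<^esub> chi2 H K \<phi> b'"
      by (simp add: Out_def chi2_eq)
  qed
qed

lemma chi_aut_emb: "b \<in> normalizer H K \<Longrightarrow> h \<in> carrier H \<Longrightarrow> chi_aut b (emb h) = emb (inv b \<otimes> h \<otimes> b)"
  using alpha_cls[OF compatible_conjg] by (simp add: conjg_def)

lemma chi_aut_stable: "b \<in> normalizer H K \<Longrightarrow> chi_aut b stable = emb (twist b) \<otimes>\<^bsub>G\<^esub> stable"
proof -
  assume b: "b \<in> normalizer H K"
  have bc: "b \<in> carrier H" using normalizer_closed[OF b] .
  show ?thesis using alpha_cls[OF compatible_conjg[OF b], of "[Inr True]"] bc by (simp add: mult_cls)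
qed

lemma chi_aut_center_Fix:
  assumes j: "j \<in> center H \<inter> Fix H \<phi>"
  shows "chi_aut j = \<one>\<^bsub>Aut G\<^esub>"
proof
  fix C
  have jc: "j \<in> carrier H" and pj: "\<phi> j = j" using j by (auto simp: center_def centralizer_def Fix_def)
  have conj_id: "conjg H j h = h" if h: "h \<in> carrier H" for h
  proof -
    have "h \<otimes> j = j \<otimes> h" using j h by (auto simp: center_def centralizer_def)
    then show ?thesis using jc h by (simp add: conjg_def H.m_assoc)
  qed
  have jN: "j \<in> normalizer H K" using j H.center_in_normalizer[OF K_sub] by blast
  have "compatible (conjg H j) \<one>" using compatible_conjg[OF jN] jc pj by simp
  then show "chi_aut j C = \<one>\<^bsub>Aut G\<^esub> C"
    using alpha_id[of "conjg H j" C] alpha_ext[of "conjg H j" \<one>] conj_id jc pj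
    by (cases "C \<in> carrier G") (auto simp: Aut_one extensional_def)
qed

lemma chi_aut_K:
  assumes k: "k \<in> K"
  shows "chi_aut k = inn_aut G (emb k)"
proof
  fix C
  have kc: "k \<in> carrier H" using k K_carr by blast
  have kN: "k \<in> normalizer H K" using k H.subgroup_subset_normalizer[OF K] by blast
  have ik: "inv k \<in> K" using k K by (simp add: subgroup.m_inv_closed)
  have ikc: "inv k \<in> carrier H" using kc by simp
  have emb_inv_k: "inv\<^bsub>G\<^esub> (emb k) = emb (inv k)" using emb_inv[OF kc] .
  have letters: "cls (subst (conjg H k) (twist k) [l]) = inv\<^bsub>G\<^esub> emb k \<otimes>\<^bsub>G\<^esub> cls [l] \<otimes>\<^bsub>G\<^esub> emb k" if l: "[l] \<in> W" for l
  proof (cases l)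
    case (Inl h)
    then have h: "h \<in> carrier H" using l by simp
    show ?thesis using Inl h kc ikc by (simp add: conjg_def emb_inv_k emb_mult)
  next
    case (Inr b)
    show ?thesis
    proof (cases b)
      case True
      have pkc: "\<phi> k \<in> carrier H" using kc by simp
      have "cls (subst (conjg H k) (twist k) [l]) = emb (inv k \<otimes> \<phi> k) \<otimes>\<^bsub>G\<^esub> stable"
        using Inr True kc by (simp add: mult_cls)
      also have "\<dots> = emb (inv k) \<otimes>\<^bsub>G\<^esub> emb (\<phi> k) \<otimes>\<^bsub>G\<^esub> stable"
        by (simp only: emb_mult[OF ikc pkc])
      also have "\<dots> = emb (inv k) \<otimes>\<^bsub>G\<^esub> (emb (\<phi> k) \<otimes>\<^bsub>G\<^esub> stable)"
        using ikc pkc by (simp only: Gp.m_assoc emb_closed stable_closed)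
      also have "\<dots> = emb (inv k) \<otimes>\<^bsub>G\<^esub> stable \<otimes>\<^bsub>G\<^esub> emb k" using stable_emb[OF k] kc by (simp add: Gp.m_assoc)
      finally show ?thesis using Inr True by (simp add: emb_inv_k)
    next
      case False
      have iax: "inv (twist k) = inv (\<phi> k) \<otimes> k" using kc by (simp add: H.inv_mult_group)
      have pkc: "inv (\<phi> k) \<in> carrier H" using kc by simp
      have "cls (subst (conjg H k) (twist k) [l]) = stable_inv \<otimes>\<^bsub>G\<^esub> emb (inv (\<phi> k) \<otimes> k)"
        using Inr False iax kc by (simp add: mult_cls)
      also have "\<dots> = stable_inv \<otimes>\<^bsub>G\<^esub> (emb (inv (\<phi> k)) \<otimes>\<^bsub>G\<^esub> emb k)"
        by (simp only: emb_mult[OF pkc kc])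
      also have "\<dots> = stable_inv \<otimes>\<^bsub>G\<^esub> emb (\<phi> (inv k)) \<otimes>\<^bsub>G\<^esub> emb k"
        using pkc kc by (simp add: Gp.m_assoc phi_inv)
      also have "\<dots> = emb (inv k) \<otimes>\<^bsub>G\<^esub> stable_inv \<otimes>\<^bsub>G\<^esub> emb k" using emb_stable_inv[OF ik] by simp
      finally show ?thesis using Inr False by (simp add: emb_inv_k)
    qed
  qed
  show "chi_aut k C = inn_aut G (emb k) C"
    using alpha_eq_inn_aut[OF compatible_conjg[OF kN] _ letters] alpha_ext[of "conjg H k" "twist k"] kc
    by (cases "C \<in> carrier G") (auto simp: inn_aut_def extensional_def)
qed

lemma chi2_eq_Inn_iff: "b \<in> normalizer H K \<Longrightarrow> chi2 H K \<phi> b = Inn G \<longleftrightarrow> chi_aut b \<in> Inn G"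
proof -
  interpret AG: group "Aut G" by (rule Aut_group) (rule group_G)
  have "subgroup (Inn G) (Aut G)" using Gp.Inn_normal normal_imp_subgroup by blast
  then show "b \<in> normalizer H K \<Longrightarrow> ?thesis"
    using AG.coset_join1[OF _ chi_aut_Aut] AG.coset_join2[OF chi_aut_Aut] by (auto simp: chi2_eq)
qed

lemma mem_imp_chi_aut_Inn:
  assumes x: "x \<in> (center H \<inter> Fix H \<phi>) <#> K"
  shows "x \<in> normalizer H K \<and> chi_aut x \<in> Inn G"
proof -
  obtain j k where j: "j \<in> center H \<inter> Fix H \<phi>" and k: "k \<in> K" and xjk: "x = j \<otimes> k"
    using x unfolding set_mult_def by blast
  have jN: "j \<in> normalizer H K" using j H.center_in_normalizer[OF K_sub] by blast
  have kN: "k \<in> normalizer H K" using k H.subgroup_subset_normalizer[OF K] by blast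
  have kc: "k \<in> carrier H" using k K_carr by blast
  interpret AG: group "Aut G" by (rule Aut_group) (rule group_G)
  have "chi_aut x = chi_aut j \<otimes>\<^bsub>Aut G\<^esub> chi_aut k" using chi_aut_mult[OF jN kN] xjk by simp
  also have "\<dots> = inn_aut G (emb k)"
    using chi_aut_center_Fix[OF j] chi_aut_K[OF k] Gp.inn_aut_Aut kc by simp
  finally show ?thesis using xjk normalizer_mult[OF jN kN] kc by (auto simp: Inn_eq_inn_aut)
qed

lemma chi_aut_Inn_imp_mem:
  assumes ne: "K \<noteq> carrier H" and b: "b \<in> normalizer H K" and inner: "chi_aut b \<in> Inn G"
  shows "b \<in> (center H \<inter> Fix H \<phi>) <#> K"
proof -
  have bc: "b \<in> carrier H" using normalizer_closed[OF b] .
  obtain g where g: "g \<in> carrier G" and chi_g: "chi_aut b = inn_aut G g"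
    using inner by (auto simp: Inn_eq_inn_aut)
  have chi_conj: "chi_aut b C = inv\<^bsub>G\<^esub> g \<otimes>\<^bsub>G\<^esub> C \<otimes>\<^bsub>G\<^esub> g" if "C \<in> carrier G" for C
    using that chi_g by (simp add: inn_aut_def)
  define z where "z = g \<otimes>\<^bsub>G\<^esub> inv\<^bsub>G\<^esub> emb b"
  have z: "z \<in> carrier G" using g bc by (simp add: z_def)
  have z_comm: "z \<otimes>\<^bsub>G\<^esub> emb h = emb h \<otimes>\<^bsub>G\<^esub> z" if h: "h \<in> carrier H" for h
  proof -
    have "inv\<^bsub>G\<^esub> g \<otimes>\<^bsub>G\<^esub> emb h \<otimes>\<^bsub>G\<^esub> g = emb (inv b \<otimes> h \<otimes> b)"
      using chi_conj[of "emb h"] chi_aut_emb[OF b h] h by simp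
    also have "\<dots> = inv\<^bsub>G\<^esub> emb b \<otimes>\<^bsub>G\<^esub> emb h \<otimes>\<^bsub>G\<^esub> emb b"
      using bc h by (simp add: emb_mult emb_inv)
    finally show ?thesis using Gp.conj_eq_imp_commute[OF g _ emb_closed[OF h]] bc by (simp add: z_def)
  qed
  obtain c where c: "c \<in> carrier H" and zc: "z = emb c"
    using commutes_with_H_imp_emb[OF ne z z_comm] by blast
  have c_comm: "c \<otimes> h = h \<otimes> c" if h: "h \<in> carrier H" for h
    using z_comm[OF h] zc c h by (simp add: emb_mult[symmetric] emb_inj)
  have cb: "c \<otimes> b \<in> carrier H" using c bc by simp
  have g_eq: "g = emb (c \<otimes> b)"
  proof -
    have "g = z \<otimes>\<^bsub>G\<^esub> emb b" using g bc by (simp add: z_def Gp.m_assoc)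
    then show ?thesis using zc c bc by (simp add: emb_mult)
  qed
  have "emb (twist b) \<otimes>\<^bsub>G\<^esub> stable = inv\<^bsub>G\<^esub> g \<otimes>\<^bsub>G\<^esub> stable \<otimes>\<^bsub>G\<^esub> g"
    using chi_aut_stable[OF b] chi_conj[of stable] by simp
  then have "g \<otimes>\<^bsub>G\<^esub> emb (twist b) \<otimes>\<^bsub>G\<^esub> stable \<otimes>\<^bsub>G\<^esub> stable_inv = stable \<otimes>\<^bsub>G\<^esub> g \<otimes>\<^bsub>G\<^esub> stable_inv"
    using g bc by (simp add: Gp.m_assoc stable_mult_inv)
  then have conj_cb: "stable \<otimes>\<^bsub>G\<^esub> emb (c \<otimes> b) \<otimes>\<^bsub>G\<^esub> stable_inv = emb (c \<otimes> \<phi> b)"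
    using g_eq cb bc c by (simp add: Gp.m_assoc stable_mult_inv emb_mult[symmetric] H.m_assoc)
  have cbK: "c \<otimes> b \<in> K" using stable_conj_emb_imp_K[OF cb _ conj_cb] c bc by simp
  have "\<phi> (c \<otimes> b) = c \<otimes> \<phi> b"
    using stable_conj_K[OF cbK] conj_cb emb_inj cb c bc by simp
  then have c_fix: "\<phi> c = c" using c bc by simp
  have "inv c \<in> center H \<inter> Fix H \<phi>"
    using c c_comm H.commute_inv[OF c] phi_inv[OF c] c_fix
    by (auto simp: center_def centralizer_def Fix_def)
  moreover have "b = inv c \<otimes> (c \<otimes> b)" using c bc by (simp add: H.m_assoc)
  ultimately show ?thesis using cbK unfolding set_mult_def by blast
qed

lemma chi2_kernel:
  assumes ne: "K \<noteq> carrier H"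
  shows "kernel (H\<lparr>carrier := normalizer H K\<rparr>) (Out G) (chi2 H K \<phi>) = (center H \<inter> Fix H \<phi>) <#> K"
  using chi_aut_Inn_imp_mem[OF ne] mem_imp_chi_aut_Inn chi2_eq_Inn_iff
  by (auto simp: kernel_def Out_def)

end

theorem lemma5p1:
  fixes H :: "'h monoid" and K :: "'h set" and \<phi> :: "'h \<Rightarrow> 'h"
  assumes "group H"
    and "subgroup K H" and "K \<noteq> carrier H"
    and "\<phi> \<in> iso H H"
  shows "chi2 H K \<phi> ` normalizer H K \<subseteq> OutV H K \<phi>
    \<and> chi2 H K \<phi> \<in> hom (H\<lparr>carrier := normalizer H K\<rparr>) (Out (HNN H K \<phi>))
    \<and> kernel (H\<lparr>carrier := normalizer H K\<rparr>) (Out (HNN H K \<phi>)) (chi2 H K \<phi>)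
        = (center H \<inter> Fix H \<phi>) <#>\<^bsub>H\<^esub> K"
proof -
  interpret hnn H K \<phi> using assms by (simp add: hnn_def hnn_axioms_def)
  show ?thesis using chi2_OutV chi2_hom chi2_kernel[OF assms(3)] by blast
qed

end
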